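(* Let $L>0,\alpha>0$ and $h=\alpha L\sum_{k\in\mathbb Z}\delta\big(x-(k+\tfrac12)L\big)$. If there exist $\lambda>0$, $c>0$ and $\psi\in E_L$ such that $-\psi''+2\lambda\psi'-(\lambda^2-\lambda c+h(x))\psi=0$ in the weak sense, then $\psi$ is a piecewise $C^1$ function and $\psi(L/2)\ge\psi(x)$ for all $x\in\mathbb R$.
   Context: $\delta$ is the Dirac delta. $E_L$ is the set of positive $L$-periodic functions in $H^1_{loc}(\mathbb R)$ (in particular continuous). The weak sense means $\int(-\varphi''-2\lambda\varphi'-(\lambda^2-\lambda c)\varphi)\psi\,dx-\alpha L\sum_k\varphi((k+\tfrac12)L)\psi((k+\tfrac12)L)=0$ for all $\varphi\in C_0^\infty(\mathbb R)$. *)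

theory Defs
  imports "HOL-Analysis.Analysis"
begin

definition test_fun :: "(real \<Rightarrow> real) \<Rightarrow> bool" where
  "test_fun \<phi> \<longleftrightarrow> (\<forall>k x. ((deriv ^^ k) \<phi>) differentiable (at x))
                     \<and> (\<exists>R. \<forall>x. \<bar>x\<bar> > R \<longrightarrow> \<phi> x = 0)"

definition loc_L2 :: "(real \<Rightarrow> real) \<Rightarrow> bool" where
  "loc_L2 g \<longleftrightarrow> g \<in> borel_measurable lborel \<and>
     (\<forall>a b. set_integrable lborel {a..b} (\<lambda>x. (g x)\<^sup>2))"

definition H1_loc :: "(real \<Rightarrow> real) \<Rightarrow> bool" where
  "H1_loc \<psi> \<longleftrightarrow> loc_L2 \<psi> \<and> (\<exists>g. loc_L2 g \<and>
     (\<forall>\<phi>. test_fun \<phi> \<longrightarrow>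
        integral\<^sup>L lborel (\<lambda>x. \<psi> x * deriv \<phi> x) = - integral\<^sup>L lborel (\<lambda>x. g x * \<phi> x)))"

text \<open>E_L: positive L-periodic H^1_loc functions (taken as their continuous representative).\<close>
definition E_L :: "real \<Rightarrow> (real \<Rightarrow> real) set" where
  "E_L L = {\<psi>. continuous_on UNIV \<psi> \<and> (\<forall>x. \<psi> x > 0) \<and> (\<forall>x. \<psi> (x + L) = \<psi> x) \<and> H1_loc \<psi>}"

text \<open>Weak solution of -psi'' + 2 lambda psi' - (lambda^2 - lambda c + h) psi = 0 with
  h = alpha L sum_k delta(x - (k+1/2)L).\<close>
definition weak_sol :: "real \<Rightarrow> real \<Rightarrow> real \<Rightarrow> real \<Rightarrow> (real \<Rightarrow> real) \<Rightarrow> bool" where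
  "weak_sol L \<alpha> lam c \<psi> \<longleftrightarrow> (\<forall>\<phi>. test_fun \<phi> \<longrightarrow>
     integral\<^sup>L lborel (\<lambda>x. (- deriv (deriv \<phi>) x - 2 * lam * deriv \<phi> x - (lam\<^sup>2 - lam * c) * \<phi> x) * \<psi> x)
     - \<alpha> * L * (\<Sum>\<^sub>\<infinity>k::int. \<phi> ((real_of_int k + 1/2) * L) * \<psi> ((real_of_int k + 1/2) * L)) = 0)"

definition piecewise_C1 :: "(real \<Rightarrow> real) \<Rightarrow> bool" where
  "piecewise_C1 f \<longleftrightarrow> continuous_on UNIV f \<and> (\<exists>S.
     (\<forall>a b. finite (S \<inter> {a..b})) \<and>
     (\<forall>x. x \<notin> S \<longrightarrow> f differentiable (at x)) \<and>
     continuous_on (- S) (deriv f) \<and>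
     (\<forall>s\<in>S. (\<exists>l. (deriv f \<longlongrightarrow> l) (at_left s)) \<and> (\<exists>r. (deriv f \<longlongrightarrow> r) (at_right s))))"

end

theory Submission
  imports Defs
begin

text \<open>Integrating the equation twice, it says that the continuous function
  \<open>U = \<psi> - 2\<lambda>\<integral>\<psi> + (\<lambda>\<^sup>2 - \<lambda>c)\<integral>\<integral>\<psi>\<close> is affine between the Dirac masses and its slope jumps
  by \<open>-\<alpha>L\<psi>(L/2)\<close> at \<open>L/2\<close> (a du Bois-Reymond argument with bump test functions). On the
  cell \<open>(-L/2, L/2)\<close>, \<psi> therefore solves \<open>\<psi>'' = 2\<lambda>\<psi>' - (\<lambda>\<^sup>2 - \<lambda>c)\<psi>\<close>, so
  \<open>\<psi> = A exp(r\<^sub>1 x) + B exp(r\<^sub>2 x)\<close> with \<open>r\<^sub>1, r\<^sub>2 = \<lambda> \<plusminus> \<surd>(\<lambda>c)\<close>, and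
  periodicity together with the kink gives \<open>\<psi>(-L/2) = \<psi>(L/2)\<close> and \<open>\<psi>'(-L/2) < \<psi>'(L/2)\<close>.
  A positive interior maximum of such an exponential sum is impossible under these boundary
  conditions, so the maximum over a period is attained at \<open>L/2\<close>; translating the cell gives
  piecewise \<open>C\<^sup>1\<close> regularity.\<close>

section \<open>Smooth functions\<close>

definition smooth :: "(real \<Rightarrow> real) \<Rightarrow> bool" where
  "smooth f \<longleftrightarrow> (\<forall>k x. ((deriv ^^ k) f) differentiable (at x))"

lemma deriv_funpow_Suc: "(deriv ^^ Suc k) f = (deriv ^^ k) (deriv f)"
  by (subst funpow_Suc_right) simp

lemma smooth_imp_differentiable: "smooth f \<Longrightarrow> f differentiable (at x)"
  unfolding smooth_def by (metis funpow_0)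

lemma smooth_deriv: "smooth f \<Longrightarrow> smooth (deriv f)"
  unfolding smooth_def by (metis deriv_funpow_Suc)

lemma smooth_derivI: "(\<And>x. f differentiable (at x)) \<Longrightarrow> smooth (deriv f) \<Longrightarrow> smooth f"
  unfolding smooth_def by (metis deriv_funpow_Suc funpow_0 not0_implies_Suc)

lemma smooth_has_real_derivative: "smooth f \<Longrightarrow> (f has_real_derivative deriv f x) (at x)"
  by (simp add: smooth_imp_differentiable DERIV_deriv_iff_real_differentiable)

lemma smooth_imp_continuous_on: "smooth f \<Longrightarrow> continuous_on S f"
  by (meson DERIV_isCont continuous_at_imp_continuous_on smooth_has_real_derivative)

lemma funpow_deriv_add:
  fixes f g :: "real \<Rightarrow> real"
  assumes "\<And>j x. j < k \<Longrightarrow> (deriv ^^ j) f differentiable (at x) \<and> (deriv ^^ j) g differentiable (at x)"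
  shows "(deriv ^^ k) (\<lambda>x. f x + g x) = (\<lambda>x. (deriv ^^ k) f x + (deriv ^^ k) g x)"
  using assms
proof (induction k arbitrary: f g)
  case (Suc k)
  have "deriv (\<lambda>x. f x + g x) = (\<lambda>x. deriv f x + deriv g x)"
    using Suc.prems[of 0]
    by (intro ext deriv_add) (auto simp: field_differentiable_def real_differentiable_def)
  moreover have "(deriv ^^ k) (\<lambda>x. deriv f x + deriv g x) =
      (\<lambda>x. (deriv ^^ k) (deriv f) x + (deriv ^^ k) (deriv g) x)"
    using Suc.prems by (intro Suc.IH) (metis Suc_mono deriv_funpow_Suc)
  ultimately show ?case by (simp only: deriv_funpow_Suc)
qed simp

lemma smooth_add: "smooth f \<Longrightarrow> smooth g \<Longrightarrow> smooth (\<lambda>x. f x + g x)"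
  unfolding smooth_def by (subst funpow_deriv_add) (auto intro: differentiable_add)

lemma smooth_mult:
  assumes "smooth f" "smooth g"
  shows "smooth (\<lambda>x. f x * g x)"
proof -
  have "(deriv ^^ k) (\<lambda>x. f x * g x) differentiable (at x)" for k x
    using assms
  proof (induction k arbitrary: f g x rule: less_induct)
    case (less k)
    show ?case
    proof (cases k)
      case 0
      then show ?thesis using less.prems by (auto intro: differentiable_mult smooth_imp_differentiable)
    next
      case (Suc j)
      have IH: "(deriv ^^ i) (\<lambda>x. u x * v x) differentiable (at x)"
        if "i \<le> j" "smooth u" "smooth v" for i u v x
        using less.IH[of i u v] that Suc by simp
      have f': "smooth (deriv f)" and g': "smooth (deriv g)"
        using less.prems by (auto intro: smooth_deriv)
      have "deriv (\<lambda>x. f x * g x) = (\<lambda>x. deriv f x * g x + f x * deriv g x)"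
        using less.prems smooth_imp_differentiable
        by (intro ext deriv_mult) (auto simp: field_differentiable_def real_differentiable_def)
      moreover have "(deriv ^^ j) (\<lambda>x. deriv f x * g x + f x * deriv g x) =
          (\<lambda>x. (deriv ^^ j) (\<lambda>x. deriv f x * g x) x + (deriv ^^ j) (\<lambda>x. f x * deriv g x) x)"
        by (intro funpow_deriv_add conjI IH) (use f' g' less.prems in auto)
      ultimately have "(deriv ^^ k) (\<lambda>x. f x * g x) =
          (\<lambda>x. (deriv ^^ j) (\<lambda>x. deriv f x * g x) x + (deriv ^^ j) (\<lambda>x. f x * deriv g x) x)"
        by (simp only: Suc deriv_funpow_Suc)
      then show ?thesis
        using f' g' less.prems by (simp add: differentiable_add IH)
    qed
  qed
  then show ?thesis by (simp add: smooth_def)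
qed

lemma funpow_deriv_compose_affine:
  assumes "smooth f"
  shows "(deriv ^^ k) (\<lambda>x. c * f (s * x + t)) = (\<lambda>x. c * s ^ k * (deriv ^^ k) f (s * x + t))"
  using assms
proof (induction k arbitrary: f c)
  case (Suc k)
  have "deriv (\<lambda>x. c * f (s * x + t)) = (\<lambda>x. (c * s) * deriv f (s * x + t))"
    using Suc.prems
    by (intro ext DERIV_imp_deriv)
       (auto intro!: derivative_eq_intros DERIV_chain2[OF smooth_has_real_derivative])
  then have "(deriv ^^ Suc k) (\<lambda>x. c * f (s * x + t)) =
      (deriv ^^ k) (\<lambda>x. (c * s) * deriv f (s * x + t))"
    by (simp only: deriv_funpow_Suc)
  also have "\<dots> = (\<lambda>x. c * s * s ^ k * (deriv ^^ k) (deriv f) (s * x + t))"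
    using Suc.prems by (intro Suc.IH smooth_deriv)
  finally show ?case
    unfolding deriv_funpow_Suc by (simp add: mult_ac)
qed simp

lemma smooth_compose_affine:
  assumes "smooth f"
  shows "smooth (\<lambda>x. c * f (s * x + t))"
  unfolding smooth_def funpow_deriv_compose_affine[OF assms]
proof (intro allI differentiable_mult differentiable_const)
  fix k x
  have "(deriv ^^ k) f differentiable (at (s * x + t))"
    using assms unfolding smooth_def by blast
  then show "(\<lambda>x. (deriv ^^ k) f (s * x + t)) differentiable (at x)"
    by (rule differentiable_compose) (auto intro!: derivative_intros)
qed

lemma smooth_cmult: "smooth f \<Longrightarrow> smooth (\<lambda>x. c * f x)"
  using smooth_compose_affine[of f c 1 0] by simp

lemma smooth_diff: "smooth f \<Longrightarrow> smooth g \<Longrightarrow> smooth (\<lambda>x. f x - g x)"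
  using smooth_add[of f "\<lambda>x. (-1) * g x"] smooth_cmult[of g "-1"] by simp


section \<open>Bump functions\<close>

lemma poly_times_exp_neg_tendsto_0: "((\<lambda>t. poly p t * exp (- t)) \<longlongrightarrow> (0::real)) at_top"
proof -
  have "((\<lambda>t. \<Sum>i\<le>degree p. coeff p i * (t ^ i / exp t)) \<longlongrightarrow> (\<Sum>i\<le>degree p. coeff p i * 0)) at_top"
    by (intro tendsto_sum tendsto_mult tendsto_const tendsto_power_div_exp_0)
  moreover have "(\<lambda>t. \<Sum>i\<le>degree p. coeff p i * (t ^ i / exp t)) = (\<lambda>t. poly p t * exp (- t))"
    by (auto simp: poly_altdef sum_divide_distrib exp_minus field_simps)
  ultimately show ?thesis by simp
qed

text \<open>\<open>flat k\<close> is the \<open>k\<close>-th derivative of the flat function \<open>exp (-1/x)\<close> (extended by \<open>0\<close>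
  to \<open>x \<le> 0\<close>); it has the form \<open>P\<^sub>k(1/x) exp(-1/x)\<close> for \<open>x > 0\<close>.\<close>

fun flat_poly :: "nat \<Rightarrow> real poly" where
  "flat_poly 0 = 1"
| "flat_poly (Suc k) = [:0, 0, 1:] * (flat_poly k - pderiv (flat_poly k))"

definition flat :: "nat \<Rightarrow> real \<Rightarrow> real" where
  "flat k x = (if x > 0 then poly (flat_poly k) (inverse x) * exp (- inverse x) else 0)"

lemma has_real_derivative_poly_inverse_exp:
  fixes x :: real
  assumes "x > 0"
  shows "((\<lambda>x. poly p (inverse x) * exp (- inverse x)) has_real_derivative
           poly ([:0, 0, 1:] * (p - pderiv p)) (inverse x) * exp (- inverse x)) (at x)"
proof -
  have di: "(inverse has_real_derivative - (inverse x * inverse x)) (at x)"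
    using DERIV_inverse[of x] assms by (simp add: power2_eq_square)
  have d1: "((\<lambda>x. poly p (inverse x)) has_real_derivative
         poly (pderiv p) (inverse x) * (- (inverse x * inverse x))) (at x)"
    by (rule DERIV_chain2[OF poly_DERIV di])
  have d2: "((\<lambda>x. exp (- inverse x)) has_real_derivative
         exp (- inverse x) * (inverse x * inverse x)) (at x)"
    using DERIV_chain2[OF DERIV_exp DERIV_minus[OF di]] by simp
  show ?thesis
    using DERIV_mult[OF d1 d2] by (simp add: algebra_simps)
qed

lemma has_real_derivative_flat: "(flat k has_real_derivative flat (Suc k) x) (at x)"
proof (cases x "0::real" rule: linorder_cases)
  case greater
  have "((\<lambda>x. poly (flat_poly k) (inverse x) * exp (- inverse x)) has_real_derivative flat (Suc k) x) (at x)"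
    using has_real_derivative_poly_inverse_exp[OF greater, of "flat_poly k"] greater by (simp add: flat_def)
  then show ?thesis
    by (rule has_field_derivative_transform_within_open[where S="{0<..}"])
       (use greater in \<open>auto simp: flat_def\<close>)
next
  case less
  have "((\<lambda>x. 0) has_real_derivative 0) (at x)" by simp
  then have "(flat k has_real_derivative 0) (at x)"
    by (rule has_field_derivative_transform_within_open[where S="{..<0}"])
       (use less in \<open>auto simp: flat_def\<close>)
  then show ?thesis using less by (simp add: flat_def)
next
  case equal
  have left: "((\<lambda>y. flat k y / y) \<longlongrightarrow> 0) (at_left 0)"
  proof (rule Lim_transform_eventually)
    show "\<forall>\<^sub>F y in at_left 0. 0 = flat k y / y"
      by (rule eventually_mono[OF eventually_at_left_real[of "-1"]]) (auto simp: flat_def)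
  qed simp
  have "((\<lambda>t. poly (pCons 0 (flat_poly k)) t * exp (- t)) \<longlongrightarrow> 0) at_top"
    by (rule poly_times_exp_neg_tendsto_0)
  then have "((\<lambda>y. poly (pCons 0 (flat_poly k)) (inverse y) * exp (- inverse y)) \<longlongrightarrow> 0) (at_right 0)"
    using filterlim_compose filterlim_inverse_at_top_right by (fastforce simp: o_def)
  then have right: "((\<lambda>y. flat k y / y) \<longlongrightarrow> 0) (at_right 0)"
  proof (rule Lim_transform_eventually)
    show "\<forall>\<^sub>F y in at_right 0.
        poly (pCons 0 (flat_poly k)) (inverse y) * exp (- inverse y) = flat k y / y"
      by (rule eventually_mono[OF eventually_at_right_real[of 0 1]]) (auto simp: flat_def field_simps)
  qed
  have "(flat k has_real_derivative 0) (at 0)"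
    using left right by (simp add: has_field_derivative_iff filterlim_at_split flat_def)
  then show ?thesis using equal by (simp add: flat_def)
qed

lemma smooth_flat: "smooth (flat 0)"
proof -
  have "deriv (flat k) = flat (Suc k)" for k
    using DERIV_imp_deriv[OF has_real_derivative_flat] by blast
  then have "(deriv ^^ k) (flat 0) = flat k" for k
    by (induction k) simp_all
  then show ?thesis
    unfolding smooth_def using has_real_derivative_flat real_differentiable_def by metis
qed

definition bump :: "real \<Rightarrow> real \<Rightarrow> real \<Rightarrow> real" where
  "bump c r x = flat 0 (x - (c - r)) * flat 0 ((c + r) - x)"

lemma smooth_bump: "smooth (bump c r)"
proof -
  have "smooth (\<lambda>x. (1 * flat 0 (1 * x + (r - c))) * (1 * flat 0 ((-1) * x + (c + r))))"
    by (intro smooth_mult smooth_compose_affine smooth_flat)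
  then show ?thesis unfolding bump_def by (simp add: algebra_simps)
qed

lemma bump_nonneg: "bump c r x \<ge> 0"
  by (simp add: bump_def flat_def)

lemma bump_pos: "c - r < x \<Longrightarrow> x < c + r \<Longrightarrow> bump c r x > 0"
  by (simp add: bump_def flat_def)

lemma bump_eq_0: "x \<le> c - r \<or> c + r \<le> x \<Longrightarrow> bump c r x = 0"
  by (auto simp: bump_def flat_def)


definition vanishes_outside :: "(real \<Rightarrow> real) \<Rightarrow> real \<Rightarrow> real \<Rightarrow> bool" where
  "vanishes_outside f a b \<longleftrightarrow> (\<forall>x. x \<le> a \<or> b \<le> x \<longrightarrow> f x = 0)"

lemma test_fun_imp_smooth: "test_fun f \<Longrightarrow> smooth f"
  unfolding test_fun_def smooth_def by blast

lemma test_funI: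
  assumes "smooth f" "vanishes_outside f a b"
  shows "test_fun f"
  unfolding test_fun_def
proof (intro conjI)
  show "\<forall>k x. (deriv ^^ k) f differentiable (at x)" using assms(1) unfolding smooth_def by blast
  have "f x = 0" if "\<bar>a\<bar> + \<bar>b\<bar> < \<bar>x\<bar>" for x
  proof -
    have "x \<le> a \<or> b \<le> x" using that by (cases "x \<ge> 0") auto
    then show ?thesis using assms(2) unfolding vanishes_outside_def by blast
  qed
  then show "\<exists>R. \<forall>x. R < \<bar>x\<bar> \<longrightarrow> f x = 0" by blast
qed

lemma vanishes_outside_deriv:
  assumes "vanishes_outside f a b" "a' < a" "b < b'"
  shows "vanishes_outside (deriv f) a' b'"
  unfolding vanishes_outside_def
proof (intro allI impI)
  fix x assume x: "x \<le> a' \<or> b' \<le> x"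
  have "open ({..<a} \<union> {b<..})" by auto
  moreover have "x \<in> {..<a} \<union> {b<..}" using x assms by auto
  moreover have "f y = 0" if "y \<in> {..<a} \<union> {b<..}" for y
    using that assms(1) unfolding vanishes_outside_def by auto
  ultimately have "(f has_real_derivative 0) (at x)"
    by (intro has_field_derivative_transform_within_open[OF DERIV_const]) auto
  then show "deriv f x = 0" by (rule DERIV_imp_deriv)
qed

lemma integral_cmult: "integral S (\<lambda>x. c * f x) = c * integral S (f :: _ \<Rightarrow> real)"
  using integral_cmul[of S c f] by simp

lemma lborel_integral_eq_integral:
  fixes f :: "real \<Rightarrow> real"
  assumes cont: "continuous_on UNIV f" and van: "vanishes_outside f a b"
  shows "integral\<^sup>L lborel f = integral {a..b} f"
proof -
  have zero: "f x = 0" if "x \<notin> {a..b}" for x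
    using van that unfolding vanishes_outside_def by auto
  have "integrable lborel (\<lambda>x. indicator {a..b} x *\<^sub>R f x)"
    by (rule borel_integrable_compact) (auto intro: continuous_on_subset[OF cont])
  moreover have "(\<lambda>x. indicator {a..b} x *\<^sub>R f x) = f"
    using zero by (auto simp: fun_eq_iff indicator_def)
  ultimately have "integral\<^sup>L lborel f = integral UNIV f"
    by (simp add: integral_lborel)
  also have "\<dots> = integral UNIV (\<lambda>x. if x \<in> {a..b} then f x else 0)"
    by (rule integral_cong) (use zero in auto)
  also have "\<dots> = integral {a..b} f"
    by (rule integral_restrict_UNIV)
  finally show ?thesis .
qed

lemma has_real_derivative_integral_from:
  fixes g :: "real \<Rightarrow> real"
  assumes "continuous_on {a..b} g" "a < x" "x < b"
  shows "((\<lambda>t. integral {a..t} g) has_real_derivative g x) (at x)"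
proof -
  have "((\<lambda>t. integral {a..t} g) has_real_derivative g x) (at x within {a..b})"
    by (rule integral_has_real_derivative) (use assms in auto)
  moreover have "at x within {a..b} = at x"
    by (rule at_within_interior) (use assms in auto)
  ultimately show ?thesis by simp
qed

lemma has_real_derivative_integral_from_vanishing:
  fixes g :: "real \<Rightarrow> real"
  assumes cont: "continuous_on UNIV g" and van: "\<And>t. t \<le> c \<Longrightarrow> g t = 0" and "a < c"
  shows "((\<lambda>t. integral {a..t} g) has_real_derivative g x) (at x)"
proof (cases "a < x")
  case True
  then show ?thesis
    by (intro has_real_derivative_integral_from[of a "x + 1"] continuous_on_subset[OF cont]) auto
next
  case False
  have zero: "integral {a..t} g = 0" if "t \<in> {..<c}" for t
  proof -
    have "integral {a..t} g = integral {a..t} (\<lambda>_. 0)"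
      by (rule integral_cong) (use van that in auto)
    then show ?thesis by simp
  qed
  have "((\<lambda>t. integral {a..t} g) has_real_derivative 0) (at x)"
    by (rule has_field_derivative_transform_within_open[OF DERIV_const, where S="{..<c}"])
       (use zero False \<open>a < c\<close> in auto)
  moreover have "g x = 0" using False \<open>a < c\<close> van by simp
  ultimately show ?thesis by simp
qed

lemma integral_Icc_vanishing_tail:
  fixes g :: "real \<Rightarrow> real"
  assumes "continuous_on UNIV g" "\<And>x. q \<le> x \<Longrightarrow> g x = 0" "a \<le> q" "q \<le> t"
  shows "integral {a..t} g = integral {a..q} g"
proof -
  have "integral {a..q} g + integral {q..t} g = integral {a..t} g"
    by (rule Henstock_Kurzweil_Integration.integral_combine)
       (use assms in \<open>auto intro!: integrable_continuous_interval continuous_on_subset[OF assms(1)]\<close>)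
  moreover have "integral {q..t} g = integral {q..t} (\<lambda>_. 0)"
    by (rule integral_cong) (use assms(2) in auto)
  ultimately show ?thesis by (simp only: integral_0 add_0_right)
qed

lemma continuous_on_if_has_real_derivative:
  "(\<And>x. x \<in> S \<Longrightarrow> (f has_real_derivative f' x) (at x)) \<Longrightarrow> continuous_on S f"
  by (rule DERIV_continuous_on) (rule has_field_derivative_at_within)

lemma integral_by_parts_vanishing:
  fixes F G f g :: "real \<Rightarrow> real"
  assumes "P \<le> Q"
    and F: "\<And>x. x \<in> {P..Q} \<Longrightarrow> (F has_real_derivative f x) (at x)"
    and G: "\<And>x. x \<in> {P..Q} \<Longrightarrow> (G has_real_derivative g x) (at x)"
    and "continuous_on {P..Q} f" "continuous_on {P..Q} g" "G P = 0" "G Q = 0"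
  shows "integral {P..Q} (\<lambda>x. F x * g x) = - integral {P..Q} (\<lambda>x. f x * G x)"
proof -
  have cF: "continuous_on {P..Q} F" and cG: "continuous_on {P..Q} G"
    using F G by (blast intro: continuous_on_if_has_real_derivative)+
  have "((\<lambda>x. f x * G x + F x * g x) has_integral F Q * G Q - F P * G P) {P..Q}"
  proof (rule fundamental_theorem_of_calculus[OF \<open>P \<le> Q\<close>])
    fix x assume "x \<in> {P..Q}"
    then have "((\<lambda>x. F x * G x) has_real_derivative f x * G x + F x * g x) (at x)"
      using F G by (auto intro!: derivative_eq_intros)
    then show "((\<lambda>x. F x * G x) has_vector_derivative f x * G x + F x * g x) (at x within {P..Q})"
      by (simp add: has_real_derivative_iff_has_vector_derivative has_vector_derivative_at_within)
  qed
  then have "integral {P..Q} (\<lambda>x. f x * G x + F x * g x) = 0"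
    using assms by (simp add: integral_unique)
  moreover have "integral {P..Q} (\<lambda>x. f x * G x + F x * g x) =
      integral {P..Q} (\<lambda>x. f x * G x) + integral {P..Q} (\<lambda>x. F x * g x)"
    using assms cF cG by (intro integral_add integrable_continuous_interval continuous_intros)
  ultimately show ?thesis by simp
qed


section \<open>Distributions with vanishing second derivative\<close>

lemma integral_bump_pos:
  assumes "r > 0" "a \<le> c - r" "c + r \<le> b"
  shows "integral {a..b} (bump c r) > 0"
proof -
  have cont: "continuous_on {a..b} (bump c r)" by (intro smooth_imp_continuous_on smooth_bump)
  have "integral {a..b} (bump c r) \<ge> 0"
    by (intro integral_nonneg integrable_continuous_interval cont bump_nonneg)
  moreover have "integral {a..b} (bump c r) \<noteq> 0"
    using integral_eq_0_iff[OF cont] bump_pos[of c r c] assms bump_nonneg by auto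
  ultimately show ?thesis by simp
qed

lemma bump_first_moment_bounds:
  shows "(c - r) * integral {a..b} (bump c r) \<le> integral {a..b} (\<lambda>t. t * bump c r t)"
    and "integral {a..b} (\<lambda>t. t * bump c r t) \<le> (c + r) * integral {a..b} (bump c r)"
proof -
  have cont: "continuous_on {a..b} (bump c r)" by (intro smooth_imp_continuous_on smooth_bump)
  have lo: "(c - r) * bump c r t \<le> t * bump c r t" for t
  proof (cases "c - r < t")
    case True then show ?thesis using bump_nonneg[of c r t] by (intro mult_right_mono) auto
  next
    case False then show ?thesis using bump_eq_0[of t c r] by simp
  qed
  have hi: "t * bump c r t \<le> (c + r) * bump c r t" for t
  proof (cases "t < c + r")
    case True then show ?thesis using bump_nonneg[of c r t] by (intro mult_right_mono) auto
  next
    case False then show ?thesis using bump_eq_0[of t c r] by simp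
  qed
  show "(c - r) * integral {a..b} (bump c r) \<le> integral {a..b} (\<lambda>t. t * bump c r t)"
    unfolding integral_cmult[symmetric]
    by (intro integral_le integrable_continuous_interval continuous_intros cont lo)
  show "integral {a..b} (\<lambda>t. t * bump c r t) \<le> (c + r) * integral {a..b} (bump c r)"
    unfolding integral_cmult[symmetric]
    by (intro integral_le integrable_continuous_interval continuous_intros cont hi)
qed

lemma bump_moment_det_pos:
  assumes "r > 0" "a \<le> c\<^sub>1 - r" "c\<^sub>1 + r < c\<^sub>2 - r" "c\<^sub>2 + r \<le> b"
  shows "integral {a..b} (bump c\<^sub>1 r) * integral {a..b} (\<lambda>t. t * bump c\<^sub>2 r t)
       - integral {a..b} (bump c\<^sub>2 r) * integral {a..b} (\<lambda>t. t * bump c\<^sub>1 r t) > 0"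
proof -
  define n\<^sub>1 n\<^sub>2 where "n\<^sub>1 = integral {a..b} (bump c\<^sub>1 r)" and "n\<^sub>2 = integral {a..b} (bump c\<^sub>2 r)"
  have n: "n\<^sub>1 > 0" "n\<^sub>2 > 0"
    unfolding n\<^sub>1_def n\<^sub>2_def using assms by (auto intro!: integral_bump_pos)
  have "n\<^sub>1 * ((c\<^sub>2 - r) * n\<^sub>2) \<le> n\<^sub>1 * integral {a..b} (\<lambda>t. t * bump c\<^sub>2 r t)"
    using n unfolding n\<^sub>2_def by (intro mult_left_mono bump_first_moment_bounds) auto
  moreover have "n\<^sub>2 * integral {a..b} (\<lambda>t. t * bump c\<^sub>1 r t) \<le> n\<^sub>2 * ((c\<^sub>1 + r) * n\<^sub>1)"
    using n unfolding n\<^sub>1_def by (intro mult_left_mono bump_first_moment_bounds) auto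
  moreover have "n\<^sub>1 * n\<^sub>2 * ((c\<^sub>2 - r) - (c\<^sub>1 + r)) > 0"
    using n assms by simp
  ultimately show ?thesis unfolding n\<^sub>1_def[symmetric] n\<^sub>2_def[symmetric] by (simp add: algebra_simps)
qed

lemma exists_test_fun_deriv2_eq:
  fixes \<theta> :: "real \<Rightarrow> real"
  assumes sm: "smooth \<theta>" and van: "vanishes_outside \<theta> a' b'" and "a < a'" "a' < b'" "b' \<le> b"
    and m0: "integral {a..b} \<theta> = 0" and m1: "integral {a..b} (\<lambda>t. t * \<theta> t) = 0"
  shows "\<exists>\<phi>. test_fun \<phi> \<and> vanishes_outside \<phi> a' b' \<and> deriv (deriv \<phi>) = \<theta>"
proof -
  define F where "F t = integral {a..t} \<theta>" for t
  define G where "G t = integral {a..t} (\<lambda>s. s * \<theta> s)" for t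
  define \<phi> where "\<phi> t = t * F t - G t" for t
  have ct: "continuous_on UNIV \<theta>" "continuous_on UNIV (\<lambda>s. s * \<theta> s)"
    using smooth_imp_continuous_on[OF sm] by (auto intro!: continuous_intros)
  have van_left: "\<theta> t = 0" "t * \<theta> t = 0" if "t \<le> a'" for t
    using van that unfolding vanishes_outside_def by auto
  have van_right: "\<theta> t = 0" "t * \<theta> t = 0" if "b' \<le> t" for t
    using van that unfolding vanishes_outside_def by auto
  have dF: "(F has_real_derivative \<theta> x) (at x)" for x
    unfolding F_def using ct(1) van_left(1) \<open>a < a'\<close> by (rule has_real_derivative_integral_from_vanishing)
  have dG: "(G has_real_derivative x * \<theta> x) (at x)" for x
    unfolding G_def using ct(2) van_left(2) \<open>a < a'\<close>
    by (rule has_real_derivative_integral_from_vanishing)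
  have d\<phi>: "(\<phi> has_real_derivative F x) (at x)" for x
    using DERIV_diff[OF DERIV_mult[OF DERIV_ident dF] dG, of x]
    unfolding \<phi>_def[abs_def] by simp
  have "F t = 0 \<and> G t = 0" if "t \<le> a' \<or> b' \<le> t" for t
    using that
  proof
    assume "t \<le> a'"
    have "F t = integral {a..t} (\<lambda>_. 0)"
      unfolding F_def by (rule integral_cong) (use \<open>t \<le> a'\<close> van_left in auto)
    moreover have "G t = integral {a..t} (\<lambda>_. 0)"
      unfolding G_def by (rule integral_cong) (use \<open>t \<le> a'\<close> van_left in auto)
    ultimately show ?thesis by simp
  next
    assume "b' \<le> t"
    have ab: "a \<le> b'" using \<open>a < a'\<close> \<open>a' < b'\<close> by simp
    have "F t = F b \<and> G t = G b"
      unfolding F_def G_def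
      using integral_Icc_vanishing_tail[OF ct(1) van_right(1) ab, of t]
        integral_Icc_vanishing_tail[OF ct(1) van_right(1) ab, of b]
        integral_Icc_vanishing_tail[OF ct(2) van_right(2) ab, of t]
        integral_Icc_vanishing_tail[OF ct(2) van_right(2) ab, of b]
        \<open>b' \<le> t\<close> \<open>b' \<le> b\<close>
      by simp
    then show ?thesis using m0 m1 unfolding F_def G_def by simp
  qed
  then have "vanishes_outside \<phi> a' b'"
    unfolding vanishes_outside_def \<phi>_def by auto
  moreover have "deriv \<phi> = F" "deriv F = \<theta>"
    using DERIV_imp_deriv d\<phi> dF by blast+
  moreover have "smooth \<phi>"
  proof (rule smooth_derivI)
    show "\<phi> differentiable (at x)" for x using d\<phi> real_differentiable_def by blast
    show "smooth (deriv \<phi>)"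
      unfolding \<open>deriv \<phi> = F\<close>
      by (rule smooth_derivI) (use dF real_differentiable_def sm \<open>deriv F = \<theta>\<close> in auto)
  qed
  ultimately show ?thesis using test_funI by blast
qed


lemma integral_diff_cmult2:
  fixes f g h :: "real \<Rightarrow> real"
  assumes "f integrable_on S" "g integrable_on S" "h integrable_on S"
  shows "integral S (\<lambda>t. f t - c * g t - d * h t) = integral S f - c * integral S g - d * integral S h"
proof -
  have cm: "(\<lambda>t. k * v t) integrable_on S" if "v integrable_on S" for k and v :: "real \<Rightarrow> real"
    using integrable_on_cmult_left[OF that, of k] by simp
  have "integral S (\<lambda>t. f t - c * g t - d * h t) = integral S (\<lambda>t. f t - c * g t) - integral S (\<lambda>t. d * h t)"
    by (intro integral_diff integrable_diff assms cm)
  also have "integral S (\<lambda>t. f t - c * g t) = integral S f - integral S (\<lambda>t. c * g t)"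
    by (intro integral_diff assms cm)
  finally show ?thesis by (simp add: integral_cmult)
qed

lemma fundamental_lemma_of_variations:
  fixes v :: "real \<Rightarrow> real"
  assumes "a < b" and cont: "continuous_on {a..b} v"
    and orth: "\<And>\<theta> a' b'. smooth \<theta> \<Longrightarrow> a < a' \<Longrightarrow> b' < b \<Longrightarrow> vanishes_outside \<theta> a' b' \<Longrightarrow>
              integral {a..b} (\<lambda>x. v x * \<theta> x) = 0"
    and x: "a < x" "x < b"
  shows "v x = 0"
proof (rule ccontr)
  assume "v x \<noteq> 0"
  define w where "w y = v x * v y" for y
  have "w x > 0" using \<open>v x \<noteq> 0\<close> not_real_square_gt_zero unfolding w_def by blast
  moreover have "isCont w x"
    using continuous_on_interior[OF cont] x unfolding w_def by (auto intro!: continuous_intros)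
  ultimately have "\<forall>\<^sub>F y in at x. w y > 0"
    by (simp add: isCont_def order_tendstoD(1))
  then obtain d where "d > 0" and d: "\<And>y. y \<noteq> x \<Longrightarrow> dist y x < d \<Longrightarrow> w y > 0"
    unfolding eventually_at by blast
  define r where "r = min d (min (x - a) (b - x)) / 2"
  have r: "r > 0" "a < x - r" "x + r < b" "r < d"
    using \<open>d > 0\<close> x unfolding r_def by (auto split: split_min simp: field_simps)
  have w_pos: "w y > 0" if "x - r < y" "y < x + r" for y
    using d[of y] \<open>w x > 0\<close> that r by (cases "y = x") (auto simp: dist_real_def)
  have cont_wb: "continuous_on {a..b} (\<lambda>y. w y * bump x r y)"
    unfolding w_def by (intro continuous_intros cont smooth_imp_continuous_on smooth_bump)
  have "vanishes_outside (\<lambda>y. v x * bump x r y) (x - r) (x + r)"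
    unfolding vanishes_outside_def using bump_eq_0 by simp
  then have "integral {a..b} (\<lambda>y. v y * (v x * bump x r y)) = 0"
    using orth[OF smooth_cmult[OF smooth_bump] r(2,3)] by blast
  then have "integral {a..b} (\<lambda>y. w y * bump x r y) = 0"
    unfolding w_def by (simp add: ac_simps)
  moreover have "w y * bump x r y \<ge> 0" for y
  proof (cases "x - r < y \<and> y < x + r")
    case True then show ?thesis using w_pos[of y] bump_nonneg[of x r y] by simp
  next
    case False then show ?thesis using bump_eq_0[of y x r] by auto
  qed
  ultimately have "w x * bump x r x = 0"
    using integral_eq_0_iff[OF cont_wb \<open>a < b\<close>] x by auto
  then show False using \<open>w x > 0\<close> bump_pos[of x r x] r by simp
qed

lemma exists_bumps_independent_moments:
  assumes "a < b"
  obtains \<rho>\<^sub>1 \<rho>\<^sub>2 A B where "a < A" "A < B" "B < b" "smooth \<rho>\<^sub>1" "smooth \<rho>\<^sub>2"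
    "vanishes_outside \<rho>\<^sub>1 A B" "vanishes_outside \<rho>\<^sub>2 A B"
    "integral {a..b} \<rho>\<^sub>1 * integral {a..b} (\<lambda>t. t * \<rho>\<^sub>2 t)
       - integral {a..b} \<rho>\<^sub>2 * integral {a..b} (\<lambda>t. t * \<rho>\<^sub>1 t) > 0"
proof -
  define r c\<^sub>1 c\<^sub>2 where "r = (b - a) / 8" and "c\<^sub>1 = a + (b - a) / 4" and "c\<^sub>2 = a + 3 * (b - a) / 4"
  have c: "r > 0" "a < c\<^sub>1 - r" "c\<^sub>1 + r < c\<^sub>2 - r" "c\<^sub>2 + r < b"
    using \<open>a < b\<close> unfolding r_def c\<^sub>1_def c\<^sub>2_def by (simp_all add: field_simps)
  have "integral {a..b} (bump c\<^sub>1 r) * integral {a..b} (\<lambda>t. t * bump c\<^sub>2 r t)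
       - integral {a..b} (bump c\<^sub>2 r) * integral {a..b} (\<lambda>t. t * bump c\<^sub>1 r t) > 0"
    using c by (intro bump_moment_det_pos) auto
  moreover have "vanishes_outside (bump c\<^sub>1 r) (c\<^sub>1 - r) (c\<^sub>2 + r)"
    "vanishes_outside (bump c\<^sub>2 r) (c\<^sub>1 - r) (c\<^sub>2 + r)"
    using c by (auto simp: vanishes_outside_def intro!: bump_eq_0)
  moreover have "a < c\<^sub>1 - r" "c\<^sub>1 - r < c\<^sub>2 + r" "c\<^sub>2 + r < b" using c by auto
  ultimately show thesis
    using that[of "c\<^sub>1 - r" "c\<^sub>2 + r" "bump c\<^sub>1 r" "bump c\<^sub>2 r"] smooth_bump by blast
qed

lemma integral_mult_eq_0_if_moments_eq_0:
  fixes u :: "real \<Rightarrow> real"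
  assumes orth: "\<And>\<phi> a' b'. test_fun \<phi> \<Longrightarrow> a < a' \<Longrightarrow> b' < b \<Longrightarrow> vanishes_outside \<phi> a' b' \<Longrightarrow>
              integral {a..b} (\<lambda>x. u x * deriv (deriv \<phi>) x) = 0"
    and "smooth \<theta>" "vanishes_outside \<theta> a' b'" "a < a'" "a' < b'" "b' < b"
    and "integral {a..b} \<theta> = 0" "integral {a..b} (\<lambda>t. t * \<theta> t) = 0"
  shows "integral {a..b} (\<lambda>x. u x * \<theta> x) = 0"
proof -
  obtain \<phi> where "test_fun \<phi>" "vanishes_outside \<phi> a' b'" "deriv (deriv \<phi>) = \<theta>"
    using exists_test_fun_deriv2_eq[of \<theta> a' b' a b] assms(2-) by auto
  with orth[of \<phi> a' b'] assms(4-6) show ?thesis by simp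
qed

text \<open>The functional \<open>\<theta> \<mapsto> \<integral>(u - p - q t) \<theta>\<close> vanishes on functions with vanishing moments and,
  by the choice of \<open>p, q\<close>, on the two bumps; these span everything modulo the former.\<close>

lemma affine_if_integral_deriv2_eq_0:
  fixes u :: "real \<Rightarrow> real"
  assumes "a < b" and cont: "continuous_on {a..b} u"
    and orth: "\<And>\<phi> a' b'. test_fun \<phi> \<Longrightarrow> a < a' \<Longrightarrow> b' < b \<Longrightarrow> vanishes_outside \<phi> a' b' \<Longrightarrow>
              integral {a..b} (\<lambda>x. u x * deriv (deriv \<phi>) x) = 0"
  shows "\<exists>p q. \<forall>x. a < x \<longrightarrow> x < b \<longrightarrow> u x = p + q * x"
proof -
  obtain \<rho>\<^sub>1 \<rho>\<^sub>2 A\<^sub>0 B\<^sub>0 where \<rho>: "a < A\<^sub>0" "A\<^sub>0 < B\<^sub>0" "B\<^sub>0 < b" "smooth \<rho>\<^sub>1" "smooth \<rho>\<^sub>2"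
    "vanishes_outside \<rho>\<^sub>1 A\<^sub>0 B\<^sub>0" "vanishes_outside \<rho>\<^sub>2 A\<^sub>0 B\<^sub>0"
    and det: "integral {a..b} \<rho>\<^sub>1 * integral {a..b} (\<lambda>t. t * \<rho>\<^sub>2 t)
       - integral {a..b} \<rho>\<^sub>2 * integral {a..b} (\<lambda>t. t * \<rho>\<^sub>1 t) > 0"
    by (rule exists_bumps_independent_moments[OF \<open>a < b\<close>])
  define N\<^sub>0 N\<^sub>1 U where "N\<^sub>0 f = integral {a..b} f" and "N\<^sub>1 f = integral {a..b} (\<lambda>t. t * f t)"
    and "U f = integral {a..b} (\<lambda>t. u t * f t)" for f :: "real \<Rightarrow> real"
  define det where "det = N\<^sub>0 \<rho>\<^sub>1 * N\<^sub>1 \<rho>\<^sub>2 - N\<^sub>0 \<rho>\<^sub>2 * N\<^sub>1 \<rho>\<^sub>1"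
  define p q where "p = (N\<^sub>1 \<rho>\<^sub>2 * U \<rho>\<^sub>1 - N\<^sub>1 \<rho>\<^sub>1 * U \<rho>\<^sub>2) / det" and "q = (N\<^sub>0 \<rho>\<^sub>1 * U \<rho>\<^sub>2 - N\<^sub>0 \<rho>\<^sub>2 * U \<rho>\<^sub>1) / det"
  have "det > 0" using det unfolding det_def N\<^sub>0_def N\<^sub>1_def .
  have "integral {a..b} (\<lambda>x. (u x - (p + q * x)) * \<theta> x) = 0"
    if sm: "smooth \<theta>" and "a < a'" "b' < b" and van: "vanishes_outside \<theta> a' b'" for \<theta> a' b'
  proof -
    define s\<^sub>1 s\<^sub>2 where "s\<^sub>1 = (N\<^sub>0 \<theta> * N\<^sub>1 \<rho>\<^sub>2 - N\<^sub>1 \<theta> * N\<^sub>0 \<rho>\<^sub>2) / det" and "s\<^sub>2 = (N\<^sub>0 \<rho>\<^sub>1 * N\<^sub>1 \<theta> - N\<^sub>1 \<rho>\<^sub>1 * N\<^sub>0 \<theta>) / det"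
    define \<theta>' where "\<theta>' t = \<theta> t - s\<^sub>1 * \<rho>\<^sub>1 t - s\<^sub>2 * \<rho>\<^sub>2 t" for t
    define A B where "A = min a' A\<^sub>0" and "B = max b' B\<^sub>0"
    have AB: "a < A" "A < B" "B < b" using \<open>a < a'\<close> \<open>b' < b\<close> \<rho>(1-3) unfolding A_def B_def by auto
    have "vanishes_outside \<theta>' A B"
      using van \<rho>(6,7) unfolding vanishes_outside_def \<theta>'_def A_def B_def by auto
    have int: "\<theta> integrable_on {a..b}" "\<rho>\<^sub>1 integrable_on {a..b}" "\<rho>\<^sub>2 integrable_on {a..b}"
      "(\<lambda>t. t * \<theta> t) integrable_on {a..b}" "(\<lambda>t. t * \<rho>\<^sub>1 t) integrable_on {a..b}"
      "(\<lambda>t. t * \<rho>\<^sub>2 t) integrable_on {a..b}"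
      "(\<lambda>t. u t * \<theta> t) integrable_on {a..b}" "(\<lambda>t. u t * \<rho>\<^sub>1 t) integrable_on {a..b}"
      "(\<lambda>t. u t * \<rho>\<^sub>2 t) integrable_on {a..b}"
      using smooth_imp_continuous_on[OF sm, of "{a..b}"] smooth_imp_continuous_on[OF \<rho>(4), of "{a..b}"]
        smooth_imp_continuous_on[OF \<rho>(5), of "{a..b}"]
      by (auto intro!: integrable_continuous_interval continuous_intros cont)
    have "N\<^sub>0 \<theta>' = N\<^sub>0 \<theta> - s\<^sub>1 * N\<^sub>0 \<rho>\<^sub>1 - s\<^sub>2 * N\<^sub>0 \<rho>\<^sub>2"
      unfolding N\<^sub>0_def \<theta>'_def using int(1-3) by (rule integral_diff_cmult2)
    moreover have "N\<^sub>1 \<theta>' = N\<^sub>1 \<theta> - s\<^sub>1 * N\<^sub>1 \<rho>\<^sub>1 - s\<^sub>2 * N\<^sub>1 \<rho>\<^sub>2"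
      unfolding N\<^sub>1_def \<theta>'_def using integral_diff_cmult2[OF int(4-6), of s\<^sub>1 s\<^sub>2]
      by (simp add: algebra_simps)
    moreover have "U \<theta>' = U \<theta> - s\<^sub>1 * U \<rho>\<^sub>1 - s\<^sub>2 * U \<rho>\<^sub>2"
      unfolding U_def \<theta>'_def using integral_diff_cmult2[OF int(7-9), of s\<^sub>1 s\<^sub>2]
      by (simp add: algebra_simps)
    moreover have "integral {a..b} (\<lambda>x. (u x - (p + q * x)) * \<theta> x) = U \<theta> - p * N\<^sub>0 \<theta> - q * N\<^sub>1 \<theta>"
      unfolding N\<^sub>0_def N\<^sub>1_def U_def using integral_diff_cmult2[OF int(7,1,4), of p q]
      by (simp add: algebra_simps)
    moreover have "N\<^sub>0 \<theta>' = 0" "N\<^sub>1 \<theta>' = 0"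
      using calculation(1,2) \<open>det > 0\<close> unfolding s\<^sub>1_def s\<^sub>2_def det_def by (simp_all add: field_simps)
    then have "U \<theta>' = 0"
      unfolding U_def N\<^sub>0_def N\<^sub>1_def \<theta>'_def
      by (intro integral_mult_eq_0_if_moments_eq_0[OF orth _ \<open>vanishes_outside \<theta>' A B\<close>[unfolded \<theta>'_def] AB]
          smooth_diff smooth_cmult sm \<rho>(4,5))
    ultimately show ?thesis
      using \<open>det > 0\<close> unfolding p_def q_def s\<^sub>1_def s\<^sub>2_def det_def by (simp add: field_simps)
  qed
  moreover have "continuous_on {a..b} (\<lambda>x. u x - (p + q * x))"
    by (intro continuous_intros cont)
  ultimately have "u x - (p + q * x) = 0" if "a < x" "x < b" for x
    using fundamental_lemma_of_variations[OF \<open>a < b\<close>, of "\<lambda>x. u x - (p + q * x)"] that by blast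
  then show ?thesis by auto
qed


section \<open>The weak equation as an integrated equation\<close>

definition primitive :: "real \<Rightarrow> (real \<Rightarrow> real) \<Rightarrow> real \<Rightarrow> real" where
  "primitive a f x = integral {a..x} f"

lemma has_real_derivative_primitive:
  assumes "continuous_on UNIV f" "a < x"
  shows "(primitive a f has_real_derivative f x) (at x)"
    and "(primitive a (primitive a f) has_real_derivative primitive a f x) (at x)"
proof -
  have "continuous_on {a..x + 1} (primitive a f)"
    unfolding primitive_def[abs_def]
    by (intro indefinite_integral_continuous_1 integrable_continuous_interval
        continuous_on_subset[OF assms(1)]) auto
  then show "(primitive a (primitive a f) has_real_derivative primitive a f x) (at x)"
    unfolding primitive_def[of a "primitive a f", abs_def]
    by (rule has_real_derivative_integral_from) (use assms in auto)
  show "(primitive a f has_real_derivative f x) (at x)"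
    unfolding primitive_def[abs_def]
    by (intro has_real_derivative_integral_from[of a "x + 1"] continuous_on_subset[OF assms(1)])
       (use assms in auto)
qed

text \<open>Formally \<open>(integrated_op a \<beta> \<gamma> \<psi>)'' = \<psi>'' - \<beta>\<psi>' + \<gamma>\<psi>\<close>; unlike \<open>\<psi>''\<close>, this function is
  continuous, so the weak equation says that it is piecewise affine with kinks at the Dirac
  masses.\<close>

definition integrated_op :: "real \<Rightarrow> real \<Rightarrow> real \<Rightarrow> (real \<Rightarrow> real) \<Rightarrow> real \<Rightarrow> real" where
  "integrated_op a \<beta> \<gamma> \<psi> x = \<psi> x - \<beta> * primitive a \<psi> x + \<gamma> * primitive a (primitive a \<psi>) x"

lemma continuous_on_integrated_op:
  assumes "continuous_on UNIV \<psi>" "a < P"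
  shows "continuous_on {P..Q} (integrated_op a \<beta> \<gamma> \<psi>)"
proof -
  have "continuous_on {P..Q} (primitive a \<psi>)"
    by (rule continuous_on_if_has_real_derivative[where f'=\<psi>])
       (use has_real_derivative_primitive(1)[OF assms(1)] assms(2) in auto)
  moreover have "continuous_on {P..Q} (primitive a (primitive a \<psi>))"
    by (rule continuous_on_if_has_real_derivative[where f'="primitive a \<psi>"])
       (use has_real_derivative_primitive(2)[OF assms(1)] assms(2) in auto)
  ultimately
  show ?thesis
    unfolding integrated_op_def[abs_def]
    by (intro continuous_intros continuous_on_subset[OF assms(1)]) auto
qed

lemma integral_integrated_op_deriv2:
  fixes \<psi> \<phi> :: "real \<Rightarrow> real"
  assumes c\<psi>: "continuous_on UNIV \<psi>" and sm: "smooth \<phi>" and van: "vanishes_outside \<phi> a' b'"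
    and "a < P" "P < a'" "b' < Q" "P < Q"
  shows "integral {P..Q} (\<lambda>x. integrated_op a \<beta> \<gamma> \<psi> x * deriv (deriv \<phi>) x) =
         integral {P..Q} (\<lambda>x. (deriv (deriv \<phi>) x + \<beta> * deriv \<phi> x + \<gamma> * \<phi> x) * \<psi> x)"
proof -
  define d\<^sub>1 d\<^sub>2 \<Psi>\<^sub>1 \<Psi>\<^sub>2 where "d\<^sub>1 = deriv \<phi>" and "d\<^sub>2 = deriv d\<^sub>1"
    and "\<Psi>\<^sub>1 = primitive a \<psi>" and "\<Psi>\<^sub>2 = primitive a (primitive a \<psi>)"
  have sm1: "smooth d\<^sub>1" unfolding d\<^sub>1_def using sm by (rule smooth_deriv)
  have D: "(\<phi> has_real_derivative d\<^sub>1 x) (at x)" "(d\<^sub>1 has_real_derivative d\<^sub>2 x) (at x)" for x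
    unfolding d\<^sub>2_def d\<^sub>1_def using sm sm1[unfolded d\<^sub>1_def] by (auto intro: smooth_has_real_derivative)
  have c: "continuous_on S \<phi>" "continuous_on S d\<^sub>1" "continuous_on S d\<^sub>2" for S
    unfolding d\<^sub>2_def using sm sm1 by (auto intro: smooth_imp_continuous_on smooth_deriv)
  have z: "\<phi> P = 0" "\<phi> Q = 0" "d\<^sub>1 P = 0" "d\<^sub>1 Q = 0"
    using van vanishes_outside_deriv[OF van, of P Q] assms unfolding vanishes_outside_def d\<^sub>1_def by auto
  have d\<Psi>: "(\<Psi>\<^sub>1 has_real_derivative \<psi> x) (at x)" "(\<Psi>\<^sub>2 has_real_derivative \<Psi>\<^sub>1 x) (at x)"
    if "x \<in> {P..Q}" for x
    unfolding \<Psi>\<^sub>1_def \<Psi>\<^sub>2_def using has_real_derivative_primitive[OF c\<psi>, of a x] that assms by auto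
  have c\<Psi>: "continuous_on {P..Q} \<psi>" "continuous_on {P..Q} \<Psi>\<^sub>1"
    using continuous_on_subset[OF c\<psi>] continuous_on_if_has_real_derivative[OF d\<Psi>(1)] by blast+
  have "P \<le> Q" using assms by simp
  have I\<^sub>1: "integral {P..Q} (\<lambda>x. \<Psi>\<^sub>1 x * d\<^sub>2 x) = - integral {P..Q} (\<lambda>x. \<psi> x * d\<^sub>1 x)"
    by (rule integral_by_parts_vanishing[OF \<open>P \<le> Q\<close> d\<Psi>(1) D(2) c\<Psi>(1) c(3) z(3,4)])
  have I\<^sub>2: "integral {P..Q} (\<lambda>x. \<Psi>\<^sub>2 x * d\<^sub>2 x) = - integral {P..Q} (\<lambda>x. \<Psi>\<^sub>1 x * d\<^sub>1 x)"
    by (rule integral_by_parts_vanishing[OF \<open>P \<le> Q\<close> d\<Psi>(2) D(2) c\<Psi>(2) c(3) z(3,4)])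
  have I\<^sub>3: "integral {P..Q} (\<lambda>x. \<Psi>\<^sub>1 x * d\<^sub>1 x) = - integral {P..Q} (\<lambda>x. \<psi> x * \<phi> x)"
    by (rule integral_by_parts_vanishing[OF \<open>P \<le> Q\<close> d\<Psi>(1) D(1) c\<Psi>(1) c(2) z(1,2)])
  have c\<Psi>\<^sub>2: "continuous_on {P..Q} \<Psi>\<^sub>2"
    using continuous_on_if_has_real_derivative[OF d\<Psi>(2)] .
  have int: "(\<lambda>x. \<psi> x * d\<^sub>2 x) integrable_on {P..Q}" "(\<lambda>x. \<Psi>\<^sub>1 x * d\<^sub>2 x) integrable_on {P..Q}"
    "(\<lambda>x. \<Psi>\<^sub>2 x * d\<^sub>2 x) integrable_on {P..Q}" "(\<lambda>x. \<psi> x * d\<^sub>1 x) integrable_on {P..Q}"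
    "(\<lambda>x. \<psi> x * \<phi> x) integrable_on {P..Q}"
    by (intro integrable_continuous_interval continuous_intros c c\<Psi> c\<Psi>\<^sub>2)+
  have "integral {P..Q} (\<lambda>x. integrated_op a \<beta> \<gamma> \<psi> x * d\<^sub>2 x) =
      integral {P..Q} (\<lambda>x. \<psi> x * d\<^sub>2 x - \<beta> * (\<Psi>\<^sub>1 x * d\<^sub>2 x) - (- \<gamma>) * (\<Psi>\<^sub>2 x * d\<^sub>2 x))"
    by (rule integral_cong) (simp add: integrated_op_def \<Psi>\<^sub>1_def \<Psi>\<^sub>2_def algebra_simps)
  also have "\<dots> = integral {P..Q} (\<lambda>x. \<psi> x * d\<^sub>2 x) - \<beta> * integral {P..Q} (\<lambda>x. \<Psi>\<^sub>1 x * d\<^sub>2 x)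
      - (- \<gamma>) * integral {P..Q} (\<lambda>x. \<Psi>\<^sub>2 x * d\<^sub>2 x)"
    using int(1-3) by (rule integral_diff_cmult2)
  also have "\<dots> = integral {P..Q} (\<lambda>x. \<psi> x * d\<^sub>2 x) - (- \<beta>) * integral {P..Q} (\<lambda>x. \<psi> x * d\<^sub>1 x)
      - (- \<gamma>) * integral {P..Q} (\<lambda>x. \<psi> x * \<phi> x)"
    unfolding I\<^sub>1 I\<^sub>2 I\<^sub>3 by simp
  also have "\<dots> = integral {P..Q} (\<lambda>x. \<psi> x * d\<^sub>2 x - (- \<beta>) * (\<psi> x * d\<^sub>1 x) - (- \<gamma>) * (\<psi> x * \<phi> x))"
    using int(1,4,5) by (rule integral_diff_cmult2[symmetric])
  also have "\<dots> = integral {P..Q} (\<lambda>x. (d\<^sub>2 x + \<beta> * d\<^sub>1 x + \<gamma> * \<phi> x) * \<psi> x)"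
    by (rule integral_cong) (simp add: algebra_simps)
  finally show ?thesis unfolding d\<^sub>1_def d\<^sub>2_def .
qed

lemma integral_ramp_deriv2:
  fixes \<phi> :: "real \<Rightarrow> real"
  assumes sm: "smooth \<phi>" and "\<phi> Q = 0" "deriv \<phi> Q = 0" "P \<le> m" "m \<le> Q"
  shows "integral {P..Q} (\<lambda>x. max (x - m) 0 * deriv (deriv \<phi>) x) = \<phi> m"
proof -
  have sm1: "smooth (deriv \<phi>)" using sm by (rule smooth_deriv)
  have c: "continuous_on {P..Q} (\<lambda>x. max (x - m) 0 * deriv (deriv \<phi>) x)"
    by (intro continuous_intros smooth_imp_continuous_on smooth_deriv sm1)
  have "integral {P..m} (\<lambda>x. max (x - m) 0 * deriv (deriv \<phi>) x) = integral {P..m} (\<lambda>_. 0)"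
    by (rule integral_cong) auto
  moreover have "integral {m..Q} (\<lambda>x. max (x - m) 0 * deriv (deriv \<phi>) x) =
      integral {m..Q} (\<lambda>x. (x - m) * deriv (deriv \<phi>) x)"
    by (rule integral_cong) auto
  moreover have "((\<lambda>x. (x - m) * deriv (deriv \<phi>) x) has_integral
      ((Q - m) * deriv \<phi> Q - \<phi> Q) - ((m - m) * deriv \<phi> m - \<phi> m)) {m..Q}"
  proof (rule fundamental_theorem_of_calculus[OF \<open>m \<le> Q\<close>])
    fix x
    have "(\<phi> has_real_derivative deriv \<phi> x) (at x)"
      "(deriv \<phi> has_real_derivative deriv (deriv \<phi>) x) (at x)"
      using sm sm1 by (blast intro: smooth_has_real_derivative)+
    from DERIV_diff[OF DERIV_mult[OF DERIV_diff[OF DERIV_ident DERIV_const[where k=m]] this(2)] this(1)]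
    have "((\<lambda>x. (x - m) * deriv \<phi> x - \<phi> x) has_real_derivative
        (x - m) * deriv (deriv \<phi>) x) (at x)"
      by (simp add: mult.commute)
    then show "((\<lambda>x. (x - m) * deriv \<phi> x - \<phi> x) has_vector_derivative
        (x - m) * deriv (deriv \<phi>) x) (at x within {m..Q})"
      by (simp add: has_real_derivative_iff_has_vector_derivative has_vector_derivative_at_within)
  qed
  moreover have "integral {P..m} (\<lambda>x. max (x - m) 0 * deriv (deriv \<phi>) x) +
      integral {m..Q} (\<lambda>x. max (x - m) 0 * deriv (deriv \<phi>) x) =
      integral {P..Q} (\<lambda>x. max (x - m) 0 * deriv (deriv \<phi>) x)"
    using assms c by (intro Henstock_Kurzweil_Integration.integral_combine integrable_continuous_interval)
  ultimately show ?thesis using assms by (simp add: integral_unique)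
qed


section \<open>Solving the integrated equation on an interval\<close>

lemma tendsto_at_left_if_eq_on_Ioo:
  fixes f g :: "real \<Rightarrow> real"
  assumes "isCont g m" "l < m" "\<And>x. l < x \<Longrightarrow> x < m \<Longrightarrow> f x = g x"
  shows "(f \<longlongrightarrow> g m) (at_left m)"
proof (rule Lim_transform_eventually)
  show "(g \<longlongrightarrow> g m) (at_left m)"
    using assms(1) by (simp add: isCont_def filterlim_at_split)
  show "\<forall>\<^sub>F x in at_left m. g x = f x"
    by (rule eventually_mono[OF eventually_at_left_real[OF assms(2)]]) (use assms(3) in auto)
qed

lemma tendsto_at_right_if_eq_on_Ioo:
  fixes f g :: "real \<Rightarrow> real"
  assumes "isCont g l" "l < m" "\<And>x. l < x \<Longrightarrow> x < m \<Longrightarrow> f x = g x"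
  shows "(f \<longlongrightarrow> g l) (at_right l)"
proof (rule Lim_transform_eventually)
  show "(g \<longlongrightarrow> g l) (at_right l)"
    using assms(1) by (simp add: isCont_def filterlim_at_split)
  show "\<forall>\<^sub>F x in at_right l. g x = f x"
    by (rule eventually_mono[OF eventually_at_right_real[OF assms(2)]]) (use assms(3) in auto)
qed

definition exp_sum :: "real \<Rightarrow> real \<Rightarrow> real \<Rightarrow> real \<Rightarrow> real \<Rightarrow> real" where
  "exp_sum r\<^sub>1 r\<^sub>2 A B x = A * exp (r\<^sub>1 * x) + B * exp (r\<^sub>2 * x)"

lemma has_real_derivative_exp_sum:
  "(exp_sum r\<^sub>1 r\<^sub>2 A B has_real_derivative exp_sum r\<^sub>1 r\<^sub>2 (r\<^sub>1 * A) (r\<^sub>2 * B) x) (at x)"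
  unfolding exp_sum_def[abs_def] by (auto intro!: derivative_eq_intros simp: algebra_simps)

lemma isCont_exp_sum: "isCont (exp_sum r\<^sub>1 r\<^sub>2 A B) x"
  unfolding exp_sum_def[abs_def] by (intro continuous_intros)

lemma eq_at_endpoints_if_eq_on_Ioo:
  fixes f g :: "real \<Rightarrow> real"
  assumes "\<And>x. isCont f x" "\<And>x. isCont g x" "l < m" "\<And>x. l < x \<Longrightarrow> x < m \<Longrightarrow> f x = g x"
  shows "f l = g l" "f m = g m"
proof -
  have "(f \<longlongrightarrow> g l) (at_right l)" "(f \<longlongrightarrow> f l) (at_right l)"
    using assms tendsto_at_right_if_eq_on_Ioo[where f=f and g=g] tendsto_at_right_if_eq_on_Ioo[where f=f and g=f]
    by auto
  then show "f l = g l" by (rule tendsto_unique[OF trivial_limit_at_right_real, rotated])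
  have "(f \<longlongrightarrow> g m) (at_left m)" "(f \<longlongrightarrow> f m) (at_left m)"
    using assms tendsto_at_left_if_eq_on_Ioo[where f=f and g=g] tendsto_at_left_if_eq_on_Ioo[where f=f and g=f]
    by auto
  then show "f m = g m" by (rule tendsto_unique[OF trivial_limit_at_left_real, rotated])
qed

lemma linear_ode_solution:
  fixes h :: "real \<Rightarrow> real"
  assumes "\<And>x. l < x \<Longrightarrow> x < m \<Longrightarrow> (h has_real_derivative r * h x) (at x)"
  shows "\<exists>C. \<forall>x. l < x \<longrightarrow> x < m \<longrightarrow> h x = C * exp (r * x)"
proof -
  define g where "g x = h x * exp (- (r * x))" for x
  have "(g has_real_derivative 0) (at x)" if "l < x" "x < m" for x
  proof -
    have "((\<lambda>x. exp (- (r * x))) has_real_derivative exp (- (r * x)) * (- r)) (at x)"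
      by (auto intro!: derivative_eq_intros)
    from DERIV_mult[OF assms[OF that] this] show ?thesis
      unfolding g_def[abs_def] by (simp add: algebra_simps)
  qed
  then have "g x = g ((l + m) / 2)" if "l < x" "x < m" for x
    using that by (intro DERIV_isconst3[of l m]) auto
  moreover have "h x = g x * exp (r * x)" for x
    unfolding g_def by (simp add: mult.assoc flip: exp_add)
  ultimately show ?thesis by metis
qed

text \<open>\<open>y' - r\<^sub>2 y\<close> and \<open>y' - r\<^sub>1 y\<close> each solve a first order linear equation.\<close>

lemma second_order_linear_ode_solution:
  fixes y y' :: "real \<Rightarrow> real"
  assumes "r\<^sub>1 \<noteq> r\<^sub>2"
    and dy: "\<And>x. l < x \<Longrightarrow> x < m \<Longrightarrow> (y has_real_derivative y' x) (at x)"
    and dy': "\<And>x. l < x \<Longrightarrow> x < m \<Longrightarrow>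
      (y' has_real_derivative (r\<^sub>1 + r\<^sub>2) * y' x - r\<^sub>1 * r\<^sub>2 * y x) (at x)"
  shows "\<exists>A B. \<forall>x. l < x \<longrightarrow> x < m \<longrightarrow> y x = exp_sum r\<^sub>1 r\<^sub>2 A B x
           \<and> y' x = exp_sum r\<^sub>1 r\<^sub>2 (r\<^sub>1 * A) (r\<^sub>2 * B) x"
proof -
  have gen: "((\<lambda>x. y' x - s * y x) has_real_derivative t * (y' x - s * y x)) (at x)"
    if "l < x" "x < m" "s + t = r\<^sub>1 + r\<^sub>2" "s * t = r\<^sub>1 * r\<^sub>2" for s t x
  proof -
    have "t * (y' x - s * y x) = (r\<^sub>1 + r\<^sub>2) * y' x - r\<^sub>1 * r\<^sub>2 * y x - s * y' x"
      unfolding that(3,4)[symmetric] by (simp add: algebra_simps)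
    with DERIV_diff[OF dy'[OF that(1,2)] DERIV_cmult[OF dy[OF that(1,2)], of s]] show ?thesis by simp
  qed
  obtain C\<^sub>1 where C\<^sub>1: "\<And>x. l < x \<Longrightarrow> x < m \<Longrightarrow> y' x - r\<^sub>2 * y x = C\<^sub>1 * exp (r\<^sub>1 * x)"
    using linear_ode_solution[of l m "\<lambda>x. y' x - r\<^sub>2 * y x" r\<^sub>1] gen[OF _ _ add.commute mult.commute]
    by blast
  obtain C\<^sub>2 where C\<^sub>2: "\<And>x. l < x \<Longrightarrow> x < m \<Longrightarrow> y' x - r\<^sub>1 * y x = C\<^sub>2 * exp (r\<^sub>2 * x)"
    using linear_ode_solution[of l m "\<lambda>x. y' x - r\<^sub>1 * y x" r\<^sub>2] gen[OF _ _ refl refl]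
    by blast
  define A B where "A = C\<^sub>1 / (r\<^sub>1 - r\<^sub>2)" and "B = C\<^sub>2 / (r\<^sub>2 - r\<^sub>1)"
  have AB: "C\<^sub>1 = (r\<^sub>1 - r\<^sub>2) * A" "C\<^sub>2 = (r\<^sub>2 - r\<^sub>1) * B"
    using assms(1) unfolding A_def B_def by simp_all
  have "y x = A * exp (r\<^sub>1 * x) + B * exp (r\<^sub>2 * x)
      \<and> y' x = r\<^sub>1 * A * exp (r\<^sub>1 * x) + r\<^sub>2 * B * exp (r\<^sub>2 * x)"
    if "l < x" "x < m" for x
  proof -
    have "(r\<^sub>1 - r\<^sub>2) * y x = (r\<^sub>1 - r\<^sub>2) * (A * exp (r\<^sub>1 * x) + B * exp (r\<^sub>2 * x))"
      using C\<^sub>1[OF that] C\<^sub>2[OF that] unfolding AB by (simp add: algebra_simps)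
    then have "y x = A * exp (r\<^sub>1 * x) + B * exp (r\<^sub>2 * x)"
      using assms(1) by simp
    moreover from this have "y' x = r\<^sub>1 * A * exp (r\<^sub>1 * x) + r\<^sub>2 * B * exp (r\<^sub>2 * x)"
      using C\<^sub>2[OF that] unfolding AB by (simp add: algebra_simps)
    ultimately show ?thesis ..
  qed
  then show ?thesis unfolding exp_sum_def by (metis mult.assoc)
qed

lemma has_real_derivative_if_integrated_op_affine:
  assumes "continuous_on UNIV \<psi>" "a \<le> l"
    and aff: "\<And>x. l < x \<Longrightarrow> x < m \<Longrightarrow> integrated_op a \<beta> \<gamma> \<psi> x = p + q * x"
    and "l < x" "x < m"
  shows "(\<psi> has_real_derivative q + \<beta> * \<psi> x - \<gamma> * primitive a \<psi> x) (at x)"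
proof -
  have "((\<lambda>x. p + q * x + \<beta> * primitive a \<psi> x - \<gamma> * primitive a (primitive a \<psi>) x)
      has_real_derivative q + \<beta> * \<psi> x - \<gamma> * primitive a \<psi> x) (at x)"
    using has_real_derivative_primitive[OF assms(1), of a x] assms(2,4)
    by (auto intro!: derivative_eq_intros)
  then show ?thesis
  proof (rule has_field_derivative_transform_within_open[where S="{l<..<m}"])
    fix y assume "y \<in> {l<..<m}"
    then show "p + q * y + \<beta> * primitive a \<psi> y - \<gamma> * primitive a (primitive a \<psi>) y = \<psi> y"
      using aff[of y] by (simp add: integrated_op_def algebra_simps)
  qed (use assms(4,5) in auto)
qed

lemma exp_sum_if_integrated_op_affine:
  assumes cont: "continuous_on UNIV \<psi>" "a \<le> l" "r\<^sub>1 \<noteq> r\<^sub>2"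
    and aff: "\<And>x. l < x \<Longrightarrow> x < m \<Longrightarrow> integrated_op a (r\<^sub>1 + r\<^sub>2) (r\<^sub>1 * r\<^sub>2) \<psi> x = p + q * x"
  shows "\<exists>A B. \<forall>x. l < x \<longrightarrow> x < m \<longrightarrow> \<psi> x = exp_sum r\<^sub>1 r\<^sub>2 A B x
           \<and> (\<psi> has_real_derivative exp_sum r\<^sub>1 r\<^sub>2 (r\<^sub>1 * A) (r\<^sub>2 * B) x) (at x)"
proof -
  define D where "D x = q + (r\<^sub>1 + r\<^sub>2) * \<psi> x - r\<^sub>1 * r\<^sub>2 * primitive a \<psi> x" for x
  have dpsi: "(\<psi> has_real_derivative D x) (at x)" if "l < x" "x < m" for x
    unfolding D_def by (rule has_real_derivative_if_integrated_op_affine[OF cont(1,2) aff that])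
  have "(D has_real_derivative (r\<^sub>1 + r\<^sub>2) * D x - r\<^sub>1 * r\<^sub>2 * \<psi> x) (at x)" if "l < x" "x < m" for x
    using has_real_derivative_primitive(1)[OF cont(1), of a x] dpsi[OF that] that \<open>a \<le> l\<close>
    unfolding D_def[abs_def] by (auto intro!: derivative_eq_intros)
  from second_order_linear_ode_solution[of r\<^sub>1 r\<^sub>2 l m \<psi> D, OF \<open>r\<^sub>1 \<noteq> r\<^sub>2\<close> dpsi this]
  obtain A B where "\<And>x. l < x \<Longrightarrow> x < m \<Longrightarrow> \<psi> x = exp_sum r\<^sub>1 r\<^sub>2 A B x
      \<and> D x = exp_sum r\<^sub>1 r\<^sub>2 (r\<^sub>1 * A) (r\<^sub>2 * B) x"
    by blast
  with dpsi show ?thesis by metis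
qed

lemma deriv_jump_if_integrated_op_kink:
  assumes cont: "continuous_on UNIV \<psi>" and "a \<le> l" "l < m" "m < r"
    and aff: "\<And>x. l < x \<Longrightarrow> x < r \<Longrightarrow> integrated_op a \<beta> \<gamma> \<psi> x - K * max (x - m) 0 = p + q * x"
    and left: "(deriv \<psi> \<longlongrightarrow> d\<^sub>l) (at_left m)" and right: "(deriv \<psi> \<longlongrightarrow> d\<^sub>r) (at_right m)"
  shows "d\<^sub>r - d\<^sub>l = K"
proof -
  define g where "g x = \<beta> * \<psi> x - \<gamma> * primitive a \<psi> x" for x
  have "isCont (primitive a \<psi>) m"
    using has_real_derivative_primitive(1)[OF cont, of a m] assms(2,3) by (auto intro: DERIV_isCont)
  then have "isCont (\<lambda>x. q + g x) m" "isCont (\<lambda>x. q + K + g x) m"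
    using cont unfolding g_def by (auto intro!: continuous_intros simp: continuous_on_eq_continuous_at)
  moreover have "deriv \<psi> x = q + g x" if "l < x" "x < m" for x
  proof -
    have "integrated_op a \<beta> \<gamma> \<psi> y = p + q * y" if "l < y" "y < m" for y
      using aff[of y] that assms(4) by simp
    from has_real_derivative_if_integrated_op_affine[OF cont \<open>a \<le> l\<close> this \<open>l < x\<close> \<open>x < m\<close>]
    show ?thesis unfolding g_def by (simp add: DERIV_imp_deriv algebra_simps)
  qed
  moreover have "deriv \<psi> x = q + K + g x" if "m < x" "x < r" for x
  proof -
    have "integrated_op a \<beta> \<gamma> \<psi> y = (p - K * m) + (q + K) * y" if "m < y" "y < r" for y
      using aff[of y] that assms(3) by (simp add: algebra_simps)
    from has_real_derivative_if_integrated_op_affine[OF cont _ this \<open>m < x\<close> \<open>x < r\<close>] assms(2,3)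
    show ?thesis unfolding g_def by (simp add: DERIV_imp_deriv algebra_simps)
  qed
  ultimately have lim: "(deriv \<psi> \<longlongrightarrow> q + g m) (at_left m)" "(deriv \<psi> \<longlongrightarrow> q + K + g m) (at_right m)"
    using assms(3,4) by (auto intro: tendsto_at_left_if_eq_on_Ioo tendsto_at_right_if_eq_on_Ioo)
  have "d\<^sub>l = q + g m" by (rule tendsto_unique[OF trivial_limit_at_left_real left lim(1)])
  moreover have "d\<^sub>r = q + K + g m" by (rule tendsto_unique[OF trivial_limit_at_right_real right lim(2)])
  ultimately show ?thesis by simp
qed


section \<open>Maximum of a sum of two exponentials\<close>

lemma add_one_less_exp:
  fixes y :: real
  assumes "y > 0"
  shows "1 + y < exp y"
proof -
  have "1 + y < (1 + y / 2) * (1 + y / 2)"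
    using assms by (simp add: algebra_simps)
  also have "\<dots> \<le> exp (y / 2) * exp (y / 2)"
    using assms by (intro mult_mono exp_ge_add_one_self) auto
  also have "\<dots> = exp y"
    by (simp flip: exp_add)
  finally show ?thesis .
qed

text \<open>Comparing \<open>f' - r\<^sub>1 f = (r\<^sub>2 - r\<^sub>1) B exp (r\<^sub>2 x)\<close> at the critical point and across \<open>[l, m]\<close>
  forces \<open>r\<^sub>2 < 0\<close>; strict convexity of the exponential then makes \<open>f\<close> increase up to \<open>m\<close>.\<close>

lemma exp_sum_critical_point_lt_right_end:
  fixes A B r\<^sub>1 r\<^sub>2 l m x\<^sub>0 :: real
  defines "f \<equiv> exp_sum r\<^sub>1 r\<^sub>2 A B" and "f' \<equiv> exp_sum r\<^sub>1 r\<^sub>2 (r\<^sub>1 * A) (r\<^sub>2 * B)"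
  assumes r: "0 < r\<^sub>1" "r\<^sub>2 < r\<^sub>1" and "l < m" "f l = f m" "f' l < f' m"
    and x\<^sub>0: "x\<^sub>0 < m" "f' x\<^sub>0 = 0" "f x\<^sub>0 > 0"
  shows "f x\<^sub>0 < f m"
proof -
  have G: "f' x - r\<^sub>1 * f x = (r\<^sub>2 - r\<^sub>1) * B * exp (r\<^sub>2 * x)" for x
    unfolding f_def f'_def exp_sum_def by (simp add: algebra_simps)
  have "(r\<^sub>2 - r\<^sub>1) * B * exp (r\<^sub>2 * x\<^sub>0) < 0"
    using G[of x\<^sub>0] x\<^sub>0(2) mult_pos_pos[OF r(1) x\<^sub>0(3)] by linarith
  then have "(r\<^sub>2 - r\<^sub>1) * B < 0"
    by (simp add: mult_less_0_iff)
  moreover have "(r\<^sub>2 - r\<^sub>1) * B * (exp (r\<^sub>2 * m) - exp (r\<^sub>2 * l)) > 0"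
    using G[of m] G[of l] \<open>f l = f m\<close> \<open>f' l < f' m\<close> by (simp add: algebra_simps)
  ultimately have "exp (r\<^sub>2 * m) < exp (r\<^sub>2 * l)"
    by (smt (verit) mult_nonpos_nonneg)
  then have "r\<^sub>2 < 0"
    using \<open>l < m\<close> by (metis exp_less_cancel_iff mult_le_cancel_left not_less order.strict_iff_not)
  define t a b where "t = m - x\<^sub>0" and "a = A * exp (r\<^sub>1 * x\<^sub>0)" and "b = B * exp (r\<^sub>2 * x\<^sub>0)"
  have "t > 0" using x\<^sub>0 by (simp add: t_def)
  have ab: "(r\<^sub>1 - r\<^sub>2) * a = - r\<^sub>2 * f x\<^sub>0" "(r\<^sub>1 - r\<^sub>2) * b = r\<^sub>1 * f x\<^sub>0"
    using \<open>f' x\<^sub>0 = 0\<close> unfolding a_def b_def f_def f'_def exp_sum_def by (simp_all add: algebra_simps)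
  have fm: "f m = a * exp (r\<^sub>1 * t) + b * exp (r\<^sub>2 * t)"
    unfolding f_def a_def b_def t_def exp_sum_def by (simp add: algebra_simps flip: exp_add)
  have "- r\<^sub>2 * (1 + r\<^sub>1 * t) < - r\<^sub>2 * exp (r\<^sub>1 * t)"
    using \<open>r\<^sub>2 < 0\<close> add_one_less_exp[of "r\<^sub>1 * t"] r \<open>t > 0\<close> by simp
  moreover have "r\<^sub>1 * (1 + r\<^sub>2 * t) \<le> r\<^sub>1 * exp (r\<^sub>2 * t)"
    using r by (intro mult_left_mono exp_ge_add_one_self) auto
  ultimately have "r\<^sub>1 - r\<^sub>2 < - r\<^sub>2 * exp (r\<^sub>1 * t) + r\<^sub>1 * exp (r\<^sub>2 * t)"
    by (simp add: algebra_simps)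
  then have "(r\<^sub>1 - r\<^sub>2) * f x\<^sub>0 < (- r\<^sub>2 * exp (r\<^sub>1 * t) + r\<^sub>1 * exp (r\<^sub>2 * t)) * f x\<^sub>0"
    using x\<^sub>0(3) by simp
  also have "\<dots> = (r\<^sub>1 - r\<^sub>2) * f m"
    unfolding fm distrib_left mult.assoc[symmetric] ab by (simp add: algebra_simps)
  finally show ?thesis using r by simp
qed

lemma exp_sum_le_right_end:
  fixes A B r\<^sub>1 r\<^sub>2 l m :: real
  defines "f \<equiv> exp_sum r\<^sub>1 r\<^sub>2 A B" and "f' \<equiv> exp_sum r\<^sub>1 r\<^sub>2 (r\<^sub>1 * A) (r\<^sub>2 * B)"
  assumes "0 < r\<^sub>1" "r\<^sub>2 < r\<^sub>1" "l < m" "f l = f m" "f' l < f' m"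
    and pos: "\<And>x. l < x \<Longrightarrow> x < m \<Longrightarrow> f x > 0"
    and x: "l \<le> x" "x \<le> m"
  shows "f x \<le> f m"
proof -
  have df: "(f has_real_derivative f' x) (at x)" for x
    unfolding f_def f'_def by (rule has_real_derivative_exp_sum)
  then have "continuous_on {l..m} f"
    by (blast intro: continuous_on_if_has_real_derivative)
  then obtain x\<^sub>0 where x\<^sub>0: "l \<le> x\<^sub>0" "x\<^sub>0 \<le> m" "\<And>y. l \<le> y \<Longrightarrow> y \<le> m \<Longrightarrow> f y \<le> f x\<^sub>0"
    using continuous_attains_sup[of "{l..m}" f] \<open>l < m\<close> by auto
  have "f x\<^sub>0 \<le> f m"
  proof (rule ccontr)
    assume gt: "\<not> f x\<^sub>0 \<le> f m"
    with \<open>f l = f m\<close> have "l < x\<^sub>0" "x\<^sub>0 < m" using x\<^sub>0 by (auto simp: order.order_iff_strict)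
    then have "f' x\<^sub>0 = 0"
      by (intro DERIV_local_max[OF df[of x\<^sub>0], of "min (x\<^sub>0 - l) (m - x\<^sub>0)"] allI impI x\<^sub>0(3))
         (auto simp: abs_less_iff)
    then have "f x\<^sub>0 < f m"
      using exp_sum_critical_point_lt_right_end[of r\<^sub>1 r\<^sub>2 l m A B x\<^sub>0] assms pos \<open>l < x\<^sub>0\<close> \<open>x\<^sub>0 < m\<close>
      unfolding f_def f'_def by blast
    with gt show False by simp
  qed
  with x\<^sub>0(3) x show ?thesis by (meson order.trans)
qed


section \<open>Periodic functions that are \<open>C\<^sup>1\<close> on a period cell\<close>

lemma periodic_int_shift:
  assumes per: "\<And>x. f (x + L) = f x"
  shows "f (x + real_of_int n * L) = f x"
proof -
  have nat: "f (y + real k * L) = f y" for y k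
  proof (induction k)
    case (Suc k)
    then show ?case using per[of "y + real k * L"] by (simp add: algebra_simps)
  qed simp
  show ?thesis
  proof (cases "n \<ge> 0")
    case True
    then show ?thesis using nat[of x "nat n"] by simp
  next
    case False
    then show ?thesis using nat[of "x + real_of_int n * L" "nat (- n)"] by simp
  qed
qed

lemma exists_cell_index:
  assumes "L > 0"
  shows "\<exists>n::int. l + real_of_int n * L \<le> x \<and> x < l + real_of_int (n + 1) * L"
proof
  define n where "n = \<lfloor>(x - l) / L\<rfloor>"
  have "real_of_int n \<le> (x - l) / L" "(x - l) / L < real_of_int n + 1"
    unfolding n_def by linarith+
  then show "l + real_of_int n * L \<le> x \<and> x < l + real_of_int (n + 1) * L"
    using assms by (simp add: field_simps)
qed

context
  fixes f g :: "real \<Rightarrow> real" and L l :: real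
  assumes L: "L > 0" and per: "\<And>x. f (x + L) = f x"
    and cell: "\<And>x. l < x \<Longrightarrow> x < l + L \<Longrightarrow> (f has_real_derivative g x) (at x)"
    and cont_g: "\<And>x. isCont g x"
begin

lemma has_real_derivative_periodic:
  assumes "l + real_of_int n * L < x" "x < l + real_of_int (n + 1) * L"
  shows "(f has_real_derivative g (x - real_of_int n * L)) (at x)"
proof -
  have "f = (\<lambda>y. f (y - real_of_int n * L))"
    using periodic_int_shift[of f L, OF per, of "_ - real_of_int n * L" n] by (simp add: fun_eq_iff)
  moreover have "((\<lambda>y. f (y - real_of_int n * L)) has_real_derivative g (x - real_of_int n * L)) (at x)"
    using DERIV_chain2[OF cell DERIV_diff[OF DERIV_ident DERIV_const]] assms
    by (simp add: algebra_simps)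
  ultimately show ?thesis by simp
qed

lemma deriv_periodic:
  assumes "l + real_of_int n * L < x" "x < l + real_of_int (n + 1) * L"
  shows "deriv f x = g (x - real_of_int n * L)"
  using has_real_derivative_periodic[OF assms] by (rule DERIV_imp_deriv)

lemma deriv_periodic_tendsto:
  shows "(deriv f \<longlongrightarrow> g (l + L)) (at_left (l + real_of_int n * L))"
    and "(deriv f \<longlongrightarrow> g l) (at_right (l + real_of_int n * L))"
proof -
  have "(deriv f \<longlongrightarrow> g (l + real_of_int n * L - real_of_int (n - 1) * L)) (at_left (l + real_of_int n * L))"
    by (rule tendsto_at_left_if_eq_on_Ioo[of _ _ "l + real_of_int (n - 1) * L"])
       (use L deriv_periodic[of "n - 1"] in \<open>auto intro!: continuous_intros isCont_o2[OF _ cont_g]\<close>)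
  then show "(deriv f \<longlongrightarrow> g (l + L)) (at_left (l + real_of_int n * L))"
    by (simp add: algebra_simps)
  have "(deriv f \<longlongrightarrow> g (l + real_of_int n * L - real_of_int n * L)) (at_right (l + real_of_int n * L))"
    by (rule tendsto_at_right_if_eq_on_Ioo[of _ _ "l + real_of_int (n + 1) * L"])
       (use L deriv_periodic[of n] in \<open>auto intro!: continuous_intros isCont_o2[OF _ cont_g]\<close>)
  then show "(deriv f \<longlongrightarrow> g l) (at_right (l + real_of_int n * L))"
    by simp
qed

lemma piecewise_C1_periodic:
  assumes "continuous_on UNIV f"
  shows "piecewise_C1 f"
  unfolding piecewise_C1_def
proof (intro conjI exI[of _ "range (\<lambda>n::int. l + real_of_int n * L)"] allI impI ballI)
  let ?S = "range (\<lambda>n::int. l + real_of_int n * L)"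
  show "continuous_on UNIV f" by fact
  show "finite (?S \<inter> {a..b})" for a b
  proof (rule finite_subset)
    show "?S \<inter> {a..b} \<subseteq> (\<lambda>n::int. l + real_of_int n * L) ` {\<lfloor>(a - l) / L\<rfloor>..\<lceil>(b - l) / L\<rceil>}"
    proof clarify
      fix n :: int assume "l + real_of_int n * L \<in> {a..b}"
      then have "(a - l) / L \<le> real_of_int n" "real_of_int n \<le> (b - l) / L"
        using L by (auto simp: field_simps)
      then have "\<lfloor>(a - l) / L\<rfloor> \<le> n" "n \<le> \<lceil>(b - l) / L\<rceil>"
        by linarith+
      then show "l + real_of_int n * L \<in> (\<lambda>n::int. l + real_of_int n * L) ` {\<lfloor>(a - l) / L\<rfloor>..\<lceil>(b - l) / L\<rceil>}"
        by auto
    qed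
  qed simp
  have cell_of: "\<exists>n. l + real_of_int n * L < x \<and> x < l + real_of_int (n + 1) * L" if "x \<notin> ?S" for x
    using exists_cell_index[OF L, of l x] that by (metis order.order_iff_strict rangeI)
  show "f differentiable (at x)" if "x \<notin> ?S" for x
    using cell_of[OF that] has_real_derivative_periodic real_differentiable_def by blast
  have "isCont (deriv f) x" if x: "x \<notin> ?S" for x
  proof -
    obtain n where n: "l + real_of_int n * L < x" "x < l + real_of_int (n + 1) * L"
      using cell_of[OF x] by blast
    have "\<forall>\<^sub>F y in nhds x. y \<in> {l + real_of_int n * L<..<l + real_of_int (n + 1) * L}"
      using n by (intro eventually_nhds_in_open) auto
    then have "\<forall>\<^sub>F y in nhds x. g (y - real_of_int n * L) = deriv f y"
      by eventually_elim (auto simp: deriv_periodic)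
    moreover have "isCont (\<lambda>y. g (y - real_of_int n * L)) x"
      by (intro continuous_intros isCont_o2[OF _ cont_g])
    ultimately show ?thesis by (rule isCont_cong[THEN iffD1])
  qed
  then show "continuous_on (- ?S) (deriv f)"
    by (intro continuous_at_imp_continuous_on) auto
  show "\<exists>d. (deriv f \<longlongrightarrow> d) (at_left s)" "\<exists>d. (deriv f \<longlongrightarrow> d) (at_right s)" if "s \<in> ?S" for s
    using that deriv_periodic_tendsto by blast+
qed

end


section \<open>The periodic solution\<close>

lemma infsum_eq_single:
  fixes f :: "'a \<Rightarrow> 'b::{comm_monoid_add, t2_space}"
  assumes "\<And>k. k \<noteq> k\<^sub>0 \<Longrightarrow> f k = 0"
  shows "infsum f UNIV = f k\<^sub>0"
proof -
  have "infsum f UNIV = infsum f {k\<^sub>0}"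
    by (rule infsum_cong_neutral) (use assms in auto)
  then show ?thesis by simp
qed

lemma half_lattice_not_in_cell:
  assumes "L > 0" "-L/2 < (real_of_int k + 1/2) * L" "(real_of_int k + 1/2) * L < L/2"
  shows False
proof -
  have "(-1/2) * L < (real_of_int k + 1/2) * L" "(real_of_int k + 1/2) * L < (1/2) * L"
    using assms by simp_all
  then have "-1/2 < real_of_int k + 1/2" "real_of_int k + 1/2 < 1/2"
    using assms(1) by (simp_all only: mult_less_cancel_right_pos)
  then have "-1 < k" "k < 0" by linarith+
  then show False by linarith
qed

lemma half_lattice_in_period:
  assumes "L > 0" "0 < (real_of_int k + 1/2) * L" "(real_of_int k + 1/2) * L < L"
  shows "k = 0"
proof -
  have "0 * L < (real_of_int k + 1/2) * L" "(real_of_int k + 1/2) * L < 1 * L"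
    using assms by simp_all
  then have "0 < real_of_int k + 1/2" "real_of_int k + 1/2 < 1"
    using assms(1) by (simp_all only: mult_less_cancel_right_pos)
  then have "-1 < k" "k < 1" by linarith+
  then show ?thesis by linarith
qed

context
  fixes L \<alpha> lam c r\<^sub>1 r\<^sub>2 :: real and \<psi> :: "real \<Rightarrow> real"
  assumes L: "L > 0" and \<alpha>: "\<alpha> > 0" and lam: "lam > 0" and c: "c > 0"
    and E: "\<psi> \<in> E_L L" and W: "weak_sol L \<alpha> lam c \<psi>"
    and r\<^sub>1: "r\<^sub>1 = lam + sqrt (lam * c)" and r\<^sub>2: "r\<^sub>2 = lam - sqrt (lam * c)"
begin

lemma psi_continuous: "continuous_on UNIV \<psi>"
  and psi_pos: "\<psi> x > 0"
  and psi_periodic: "\<psi> (x + L) = \<psi> x"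
  using E unfolding E_L_def by auto

lemma char_roots: "0 < r\<^sub>1" "r\<^sub>2 < r\<^sub>1" "r\<^sub>1 + r\<^sub>2 = 2 * lam" "r\<^sub>1 * r\<^sub>2 = lam\<^sup>2 - lam * c"
proof -
  have s: "sqrt (lam * c) > 0" "sqrt (lam * c) * sqrt (lam * c) = lam * c"
    using lam c by simp_all
  show "0 < r\<^sub>1" "r\<^sub>2 < r\<^sub>1" "r\<^sub>1 + r\<^sub>2 = 2 * lam"
    using s(1) lam unfolding r\<^sub>1 r\<^sub>2 by linarith+
  show "r\<^sub>1 * r\<^sub>2 = lam\<^sup>2 - lam * c"
    using s(2) unfolding r\<^sub>1 r\<^sub>2 by (simp add: algebra_simps power2_eq_square)
qed

abbreviation U :: "real \<Rightarrow> real" where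
  "U \<equiv> integrated_op (-L) (r\<^sub>1 + r\<^sub>2) (r\<^sub>1 * r\<^sub>2) \<psi>"

lemma integral_U_deriv2:
  assumes "test_fun \<phi>" "vanishes_outside \<phi> a' b'" "-L < P" "P < a'" "b' < Q" "P < Q"
  shows "integral {P..Q} (\<lambda>x. U x * deriv (deriv \<phi>) x) =
    - \<alpha> * L * (\<Sum>\<^sub>\<infinity>k::int. \<phi> ((real_of_int k + 1/2) * L) * \<psi> ((real_of_int k + 1/2) * L))"
proof -
  define h where
    "h x = (deriv (deriv \<phi>) x + (r\<^sub>1 + r\<^sub>2) * deriv \<phi> x + r\<^sub>1 * r\<^sub>2 * \<phi> x) * \<psi> x" for x
  have sm: "smooth \<phi>" using assms(1) by (rule test_fun_imp_smooth)
  have d1: "vanishes_outside (deriv \<phi>) ((P + a') / 2) ((b' + Q) / 2)" "vanishes_outside (deriv \<phi>) P Q"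
    using assms by (auto intro: vanishes_outside_deriv)
  have d2: "vanishes_outside (deriv (deriv \<phi>)) P Q"
    by (rule vanishes_outside_deriv[OF d1(1)]) (use assms in auto)
  have "vanishes_outside h P Q"
    unfolding vanishes_outside_def
  proof (intro allI impI)
    fix x assume x: "x \<le> P \<or> Q \<le> x"
    then have "\<phi> x = 0"
      using assms(2,4,5) unfolding vanishes_outside_def by force
    with x d1(2) d2 show "h x = 0" unfolding vanishes_outside_def h_def by auto
  qed
  moreover have "continuous_on UNIV h"
    using smooth_imp_continuous_on[OF sm] smooth_imp_continuous_on[OF smooth_deriv[OF sm]]
      smooth_imp_continuous_on[OF smooth_deriv[OF smooth_deriv[OF sm]]]
    unfolding h_def by (intro continuous_intros psi_continuous) auto
  ultimately have "integral {P..Q} h = integral\<^sup>L lborel h"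
    by (simp add: lborel_integral_eq_integral)
  also have "\<dots> = - integral\<^sup>L lborel (\<lambda>x. (- deriv (deriv \<phi>) x - (r\<^sub>1 + r\<^sub>2) * deriv \<phi> x
      - r\<^sub>1 * r\<^sub>2 * \<phi> x) * \<psi> x)"
    unfolding h_def by (simp flip: integral_minus add: algebra_simps)
  also have "\<dots> = - \<alpha> * L * (\<Sum>\<^sub>\<infinity>k::int. \<phi> ((real_of_int k + 1/2) * L) * \<psi> ((real_of_int k + 1/2) * L))"
    using W assms(1) unfolding weak_sol_def char_roots(3,4)[symmetric] by simp
  finally show ?thesis
    using integral_integrated_op_deriv2[OF psi_continuous sm assms(2-6)] unfolding h_def by simp
qed

lemma U_affine_on_cell: "\<exists>p q. \<forall>x. -L/2 < x \<longrightarrow> x < L/2 \<longrightarrow> U x = p + q * x"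
proof (rule affine_if_integral_deriv2_eq_0)
  show "-L/2 < L/2" "continuous_on {-L/2..L/2} U"
    using L by (auto intro: continuous_on_integrated_op psi_continuous)
  fix \<phi> a' b' assume \<phi>: "test_fun \<phi>" "-L/2 < a'" "b' < L/2" "vanishes_outside \<phi> a' b'"
  have "\<phi> ((real_of_int k + 1/2) * L) = 0" for k
    using \<phi>(2-4) half_lattice_not_in_cell[OF L, of k] unfolding vanishes_outside_def by force
  then show "integral {-L/2..L/2} (\<lambda>x. U x * deriv (deriv \<phi>) x) = 0"
    using integral_U_deriv2[OF \<phi>(1,4), of "-L/2" "L/2"] \<phi>(2,3) L by simp
qed

lemma U_kink_affine_on_period:
  "\<exists>p q. \<forall>x. 0 < x \<longrightarrow> x < L \<longrightarrow>
     U x - (- \<alpha> * L * \<psi> (L/2)) * max (x - L/2) 0 = p + q * x"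
proof (rule affine_if_integral_deriv2_eq_0)
  show "0 < L" "continuous_on {0..L} (\<lambda>x. U x - (- \<alpha> * L * \<psi> (L/2)) * max (x - L/2) 0)"
    using L by (auto intro!: continuous_intros continuous_on_integrated_op psi_continuous)
  fix \<phi> a' b' assume \<phi>: "test_fun \<phi>" "0 < a'" "b' < L" "vanishes_outside \<phi> a' b'"
  have sm: "smooth \<phi>" using \<phi>(1) by (rule test_fun_imp_smooth)
  have "\<phi> ((real_of_int k + 1/2) * L) = 0" if "k \<noteq> 0" for k
    using \<phi>(2-4) half_lattice_in_period[OF L, of k] that unfolding vanishes_outside_def by force
  then have "(\<Sum>\<^sub>\<infinity>k::int. \<phi> ((real_of_int k + 1/2) * L) * \<psi> ((real_of_int k + 1/2) * L))
      = \<phi> ((real_of_int 0 + 1/2) * L) * \<psi> ((real_of_int 0 + 1/2) * L)"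
    by (intro infsum_eq_single) simp
  then have "integral {0..L} (\<lambda>x. U x * deriv (deriv \<phi>) x) = - \<alpha> * L * (\<phi> (L/2) * \<psi> (L/2))"
    using integral_U_deriv2[OF \<phi>(1,4), of 0 L] \<phi>(2,3) L by simp
  moreover have "integral {0..L} (\<lambda>x. max (x - L/2) 0 * deriv (deriv \<phi>) x) = \<phi> (L/2)"
    using \<phi>(3,4) vanishes_outside_deriv[OF \<phi>(4), of "a' - 1" "(b' + L) / 2"] L
    by (intro integral_ramp_deriv2 sm) (auto simp: vanishes_outside_def)
  moreover have "continuous_on {0..L} U" "continuous_on {0..L} (deriv (deriv \<phi>))"
    using L by (auto intro: continuous_on_integrated_op psi_continuous smooth_imp_continuous_on
        smooth_deriv[OF smooth_deriv[OF sm]])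
  then have "(\<lambda>x. U x * deriv (deriv \<phi>) x) integrable_on {0..L}"
    "(\<lambda>x. max (x - L/2) 0 * deriv (deriv \<phi>) x) integrable_on {0..L}"
    by (auto intro!: integrable_continuous_interval continuous_intros)
  from integral_diff_cmult2[OF this integrable_0, of "- \<alpha> * L * \<psi> (L/2)" 0]
  have "integral {0..L} (\<lambda>x. U x * deriv (deriv \<phi>) x - (- \<alpha> * L * \<psi> (L/2)) *
        (max (x - L/2) 0 * deriv (deriv \<phi>) x))
      = integral {0..L} (\<lambda>x. U x * deriv (deriv \<phi>) x)
        - (- \<alpha> * L * \<psi> (L/2)) * integral {0..L} (\<lambda>x. max (x - L/2) 0 * deriv (deriv \<phi>) x)"
    by simp
  ultimately show "integral {0..L} (\<lambda>x. (U x - (- \<alpha> * L * \<psi> (L/2)) * max (x - L/2) 0) *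
      deriv (deriv \<phi>) x) = 0"
    by (simp add: algebra_simps)
qed



lemma psi_exp_sum_on_cell:
  "\<exists>A B. (\<forall>x. -L/2 \<le> x \<longrightarrow> x \<le> L/2 \<longrightarrow> \<psi> x = exp_sum r\<^sub>1 r\<^sub>2 A B x)
     \<and> (\<forall>x. -L/2 < x \<longrightarrow> x < L/2 \<longrightarrow> (\<psi> has_real_derivative exp_sum r\<^sub>1 r\<^sub>2 (r\<^sub>1 * A) (r\<^sub>2 * B) x) (at x))"
proof -
  obtain p q where aff: "\<And>x. -L/2 < x \<Longrightarrow> x < L/2 \<Longrightarrow> U x = p + q * x"
    using U_affine_on_cell by blast
  have "-L \<le> -L/2" "r\<^sub>1 \<noteq> r\<^sub>2" using L char_roots(2) by auto
  from exp_sum_if_integrated_op_affine[OF psi_continuous this aff]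
  obtain A B where AB: "\<And>x. -L/2 < x \<Longrightarrow> x < L/2 \<Longrightarrow> \<psi> x = exp_sum r\<^sub>1 r\<^sub>2 A B x
      \<and> (\<psi> has_real_derivative exp_sum r\<^sub>1 r\<^sub>2 (r\<^sub>1 * A) (r\<^sub>2 * B) x) (at x)"
    by blast
  have "isCont \<psi> x" for x
    using psi_continuous by (simp add: continuous_on_eq_continuous_at)
  then have "\<psi> (-L/2) = exp_sum r\<^sub>1 r\<^sub>2 A B (-L/2)" "\<psi> (L/2) = exp_sum r\<^sub>1 r\<^sub>2 A B (L/2)"
    using eq_at_endpoints_if_eq_on_Ioo[of \<psi> "exp_sum r\<^sub>1 r\<^sub>2 A B" "-L/2" "L/2"] AB L isCont_exp_sum
    by auto
  with AB show ?thesis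
    by (metis order.order_iff_strict)
qed

lemma deriv_jump_at_half_period:
  assumes cell: "\<And>x. -L/2 < x \<Longrightarrow> x < L/2 \<Longrightarrow>
    (\<psi> has_real_derivative exp_sum r\<^sub>1 r\<^sub>2 (r\<^sub>1 * A) (r\<^sub>2 * B) x) (at x)"
  shows "exp_sum r\<^sub>1 r\<^sub>2 (r\<^sub>1 * A) (r\<^sub>2 * B) (-L/2) - exp_sum r\<^sub>1 r\<^sub>2 (r\<^sub>1 * A) (r\<^sub>2 * B) (L/2)
    = - \<alpha> * L * \<psi> (L/2)"
proof -
  have cell': "\<And>x. -L/2 < x \<Longrightarrow> x < -L/2 + L \<Longrightarrow>
      (\<psi> has_real_derivative exp_sum r\<^sub>1 r\<^sub>2 (r\<^sub>1 * A) (r\<^sub>2 * B) x) (at x)"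
    using cell by simp
  note lim = deriv_periodic_tendsto[OF L psi_periodic cell' isCont_exp_sum, where l="-L/2" and n=1]
  have left: "(deriv \<psi> \<longlongrightarrow> exp_sum r\<^sub>1 r\<^sub>2 (r\<^sub>1 * A) (r\<^sub>2 * B) (L/2)) (at_left (L/2))"
    and right: "(deriv \<psi> \<longlongrightarrow> exp_sum r\<^sub>1 r\<^sub>2 (r\<^sub>1 * A) (r\<^sub>2 * B) (-L/2)) (at_right (L/2))"
    using lim by simp_all
  obtain p q where "\<And>x. 0 < x \<Longrightarrow> x < L \<Longrightarrow>
      U x - (- \<alpha> * L * \<psi> (L/2)) * max (x - L/2) 0 = p + q * x"
    using U_kink_affine_on_period by blast
  from deriv_jump_if_integrated_op_kink[where l=0 and r=L, OF psi_continuous _ _ _ this left right] L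
  show ?thesis by simp
qed

lemma psi_le_half_period: "\<psi> x \<le> \<psi> (L/2)"
proof -
  obtain A B where
    eq: "\<And>x. -L/2 \<le> x \<Longrightarrow> x \<le> L/2 \<Longrightarrow> \<psi> x = exp_sum r\<^sub>1 r\<^sub>2 A B x" and
    cell: "\<And>x. -L/2 < x \<Longrightarrow> x < L/2 \<Longrightarrow>
      (\<psi> has_real_derivative exp_sum r\<^sub>1 r\<^sub>2 (r\<^sub>1 * A) (r\<^sub>2 * B) x) (at x)"
    using psi_exp_sum_on_cell by blast
  have ends: "exp_sum r\<^sub>1 r\<^sub>2 A B (-L/2) = exp_sum r\<^sub>1 r\<^sub>2 A B (L/2)"
    using eq[of "-L/2"] eq[of "L/2"] psi_periodic[of "-L/2"] L by simp
  have slope: "exp_sum r\<^sub>1 r\<^sub>2 (r\<^sub>1 * A) (r\<^sub>2 * B) (-L/2) < exp_sum r\<^sub>1 r\<^sub>2 (r\<^sub>1 * A) (r\<^sub>2 * B) (L/2)"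
    using deriv_jump_at_half_period[OF cell] mult_pos_pos[OF mult_pos_pos[OF \<alpha> L] psi_pos[of "L/2"]]
    by linarith
  have pos: "exp_sum r\<^sub>1 r\<^sub>2 A B x > 0" if "-L/2 < x" "x < L/2" for x
    using eq[of x] psi_pos[of x] that by simp
  have le: "\<psi> y \<le> \<psi> (L/2)" if "-L/2 \<le> y" "y \<le> L/2" for y
    using exp_sum_le_right_end[OF char_roots(1,2) _ ends slope pos that] eq[of y] eq[of "L/2"] that L by simp
  obtain n :: int where "-L/2 + real_of_int n * L \<le> x" "x < -L/2 + real_of_int (n + 1) * L"
    using exists_cell_index[OF L] by blast
  then have "\<psi> (x - real_of_int n * L) \<le> \<psi> (L/2)"
    by (intro le) (auto simp: algebra_simps)
  then show ?thesis
    using periodic_int_shift[of \<psi> L, OF psi_periodic, of "x - real_of_int n * L" n] by simp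
qed

lemma piecewise_C1_psi: "piecewise_C1 \<psi>"
proof -
  obtain A B where "\<And>x. -L/2 < x \<Longrightarrow> x < -L/2 + L \<Longrightarrow>
      (\<psi> has_real_derivative exp_sum r\<^sub>1 r\<^sub>2 (r\<^sub>1 * A) (r\<^sub>2 * B) x) (at x)"
    using psi_exp_sum_on_cell by auto
  from piecewise_C1_periodic[OF L psi_periodic this isCont_exp_sum psi_continuous]
  show ?thesis .
qed

end

theorem mainTheorem18:
  fixes L \<alpha> lam c :: real and \<psi> :: "real \<Rightarrow> real"
  assumes "L > 0" and "\<alpha> > 0"
    and "lam > 0" and "c > 0" and "\<psi> \<in> E_L L"
    and "weak_sol L \<alpha> lam c \<psi>"
  shows "piecewise_C1 \<psi> \<and> (\<forall>x. \<psi> (L / 2) \<ge> \<psi> x)"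
  using piecewise_C1_psi[OF assms refl refl] psi_le_half_period[OF assms refl refl] by blast

end
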